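(* For each sign $\pm$, the family $\{q^{\pm}_{\boldsymbol\lambda}(x;\mathbf t)\mid \boldsymbol\lambda\in\mathcal P_{n,r}\}$ is a $\mathbb Q(\mathbf t)$-basis of $\Xi^n_{\mathbb Q}(\mathbf t)$.
   Context: Fix an integer $r\ge 2$. Let $x=(x^{(1)},\dots,x^{(r)})$, where each $x^{(k)}=(x^{(k)}_1,x^{(k)}_2,\dots)$ is an infinite family of commuting indeterminates; upper indices $k$ are read modulo $r$ with representatives in $\{1,\dots,r\}$. Let $\Xi=\Lambda(x^{(1)})\otimes_{\mathbb Z}\cdots\otimes_{\mathbb Z}\Lambda(x^{(r)})$ be the ring of symmetric functions (integer coefficients, bounded degree) symmetric in each family $x^{(k)}$ separately, and $\Xi^n$ its homogeneous part of total degree $n$. Let $\mathbf t=(t_1,\dots,t_r)$ be indeterminates, lower indices of $t$ read modulo $r$ in $\{1,\dots,r\}$ (so $t_0$ means $t_r$); $\Xi^n[\mathbf t]=\mathbb Z[\mathbf t]\otimes\Xi^n$, $\Xi^n_{\mathbb Q}(\mathbf t)=\mathbb Q(\mathbf t)\otimes\Xi^n$. $\mathcal P_{n,r}$ is the set of $r$-tuples $\boldsymbol\lambda=(\lambda^{(1)},\dots,\lambda^{(r)})$ of partitions with $\sum_k|\lambda^{(k)}|=n$. For an indeterminate $t$, $k\in\mathbb Z/r\mathbb Z$ and $s\ge 0$, define $q^{(k)}_{s,\pm}(x;t)$ by the generating function $\sum_{s\ge0}q^{(k)}_{s,\pm}(x;t)u^s=\prod_{i\ge1}\frac{1-tux^{(k\mp1)}_i}{1-ux^{(k)}_i}$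 (so $q^{(k)}_{0,\pm}=1$). For $\boldsymbol\lambda\in\mathcal P_{n,r}$ put $q^{+}_{\boldsymbol\lambda}(x;\mathbf t)=\prod_{k=1}^r\prod_{i\ge1}q^{(k)}_{\lambda^{(k)}_i,+}(x;t_{k-1})$ and $q^{-}_{\boldsymbol\lambda}(x;\mathbf t)=\prod_{k=1}^r\prod_{i\ge1}q^{(k)}_{\lambda^{(k)}_i,-}(x;t_{k})$. *)

theory Defs
  imports Complex_Main "HOL-Library.Poly_Mapping" "HOL-Computational_Algebra.Fraction_Field"
begin

text \<open>Variables: the variable x^(k)_i is indexed by the pair (k,i) (family k in 1..r,
  position i :: nat).  A monomial is an exponent function of finite support.\<close>

type_synonym mono = "nat \<times> nat \<Rightarrow> nat"

text \<open>Rational functions: fraction field of Q[t_1, t_2, ...] (poly_mapping polynomials).\<close>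
type_synonym ratfun = "((nat \<Rightarrow>\<^sub>0 nat) \<Rightarrow>\<^sub>0 rat) fract"

text \<open>Q(t_1,...,t_r) as a subfield of ratfun.\<close>
definition pvars :: "((nat \<Rightarrow>\<^sub>0 nat) \<Rightarrow>\<^sub>0 rat) \<Rightarrow> nat set" where
  "pvars p = \<Union>(Poly_Mapping.keys ` Poly_Mapping.keys p)"

definition Qt :: "nat \<Rightarrow> ratfun set" where
  "Qt r = {x. \<exists>p q. x = Fract p q \<and> q \<noteq> 0 \<and> pvars p \<subseteq> {1..r} \<and> pvars q \<subseteq> {1..r}}"

definition tvar :: "nat \<Rightarrow> ratfun" where
  "tvar k = Fract (Poly_Mapping.single (Poly_Mapping.single k 1) 1) 1"

text \<open>Index reduction modulo r with representatives in 1..r.\<close>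
definition fam :: "nat \<Rightarrow> int \<Rightarrow> nat" where
  "fam r k = nat ((k - 1) mod int r) + 1"

definition tt :: "nat \<Rightarrow> int \<Rightarrow> ratfun" where
  "tt r k = tvar (fam r k)"

definition mono_ok :: "nat \<Rightarrow> mono \<Rightarrow> bool" where
  "mono_ok r \<alpha> \<longleftrightarrow> finite {v. \<alpha> v \<noteq> 0} \<and> (\<forall>k i. \<alpha> (k,i) \<noteq> 0 \<longrightarrow> k \<in> {1..r})"

definition mdeg :: "mono \<Rightarrow> nat" where
  "mdeg \<alpha> = (\<Sum>v\<in>{v. \<alpha> v \<noteq> 0}. \<alpha> v)"

text \<open>Product of series (each finitely supported monomial has finitely many divisors).\<close>
definition ser_mult :: "(mono \<Rightarrow> 'a::comm_ring_1) \<Rightarrow> (mono \<Rightarrow> 'a) \<Rightarrow> mono \<Rightarrow> 'a" where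
  "ser_mult f g \<alpha> = (\<Sum>\<beta>\<in>{\<beta>. \<forall>v. \<beta> v \<le> \<alpha> v}. f \<beta> * g (\<lambda>v. \<alpha> v - \<beta> v))"

definition ser_one :: "mono \<Rightarrow> 'a::comm_ring_1" where
  "ser_one \<alpha> = (if (\<forall>v. \<alpha> v = 0) then 1 else 0)"

definition ser_prod :: "(mono \<Rightarrow> 'a::comm_ring_1) list \<Rightarrow> mono \<Rightarrow> 'a" where
  "ser_prod fs = foldr ser_mult fs ser_one"

definition in_fam :: "nat \<Rightarrow> mono \<Rightarrow> bool" where
  "in_fam k \<alpha> \<longleftrightarrow> finite {v. \<alpha> v \<noteq> 0} \<and> (\<forall>k' i. \<alpha> (k',i) \<noteq> 0 \<longrightarrow> k' = k)"

definition h_ser :: "nat \<Rightarrow> nat \<Rightarrow> mono \<Rightarrow> 'a::comm_ring_1" where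
  "h_ser k m \<alpha> = (if in_fam k \<alpha> \<and> mdeg \<alpha> = m then 1 else 0)"

definition e_ser :: "nat \<Rightarrow> nat \<Rightarrow> mono \<Rightarrow> 'a::comm_ring_1" where
  "e_ser k j \<alpha> = (if in_fam k \<alpha> \<and> (\<forall>v. \<alpha> v \<le> 1) \<and> mdeg \<alpha> = j then 1 else 0)"

text \<open>Coefficient of u^s in prod_i (1 - t u y_i)/(1 - u x_i), where x = x^(k), y = x^(k'):
  equals sum_{j=0..s} (-t)^j e_j(y) h_(s-j)(x).\<close>
definition q_ser :: "nat \<Rightarrow> nat \<Rightarrow> 'a::comm_ring_1 \<Rightarrow> nat \<Rightarrow> mono \<Rightarrow> 'a" where
  "q_ser k k' t s \<alpha> = (\<Sum>j\<in>{0..s}. (- t) ^ j * ser_mult (e_ser k' j) (h_ser k (s - j)) \<alpha>)"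

text \<open>r-tuples of partitions of total size n; components outside 1..r are empty;
  a partition is a weakly decreasing list of positive parts.\<close>
definition multipart :: "nat \<Rightarrow> nat \<Rightarrow> (nat \<Rightarrow> nat list) set" where
  "multipart r n = {lam. (\<forall>k. k \<notin> {1..r} \<longrightarrow> lam k = [])
      \<and> (\<forall>k. sorted_wrt (\<ge>) (lam k) \<and> 0 \<notin> set (lam k))
      \<and> (\<Sum>k=1..r. sum_list (lam k)) = n}"

text \<open>q^+_lambda: factors q^(k)_{lambda^(k)_i,+}(x; t_(k-1)), with y = x^(k-1).\<close>
definition qplus :: "nat \<Rightarrow> (nat \<Rightarrow> nat list) \<Rightarrow> mono \<Rightarrow> ratfun" where
  "qplus r lam = ser_prod (concat (map (\<lambda>k. map (\<lambda>s. q_ser k (fam r (int k - 1)) (tt r (int k - 1)) s)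
                                             (lam k)) [1..<r+1]))"

text \<open>q^-_lambda: factors q^(k)_{lambda^(k)_i,-}(x; t_k), with y = x^(k+1).\<close>
definition qminus :: "nat \<Rightarrow> (nat \<Rightarrow> nat list) \<Rightarrow> mono \<Rightarrow> ratfun" where
  "qminus r lam = ser_prod (concat (map (\<lambda>k. map (\<lambda>s. q_ser k (fam r (int k + 1)) (tt r (int k)) s)
                                             (lam k)) [1..<r+1]))"

text \<open>Xi^n_Q(t): series with coefficients in Q(t_1..t_r), supported on monomials of degree n
  in the variables of the r families, symmetric in each family separately.\<close>
definition XiQt :: "nat \<Rightarrow> nat \<Rightarrow> (mono \<Rightarrow> ratfun) set" where
  "XiQt r n = {f. (\<forall>\<alpha>. f \<alpha> \<in> Qt r)
      \<and> (\<forall>\<alpha>. f \<alpha> \<noteq> 0 \<longrightarrow> mono_ok r \<alpha> \<and> mdeg \<alpha> = n)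
      \<and> (\<forall>\<pi>. (\<forall>k. bij (\<pi> k)) \<longrightarrow> (\<forall>\<alpha>. f (\<lambda>(k,i). \<alpha> (k, \<pi> k i)) = f \<alpha>))}"

definition is_Qt_basis :: "nat \<Rightarrow> nat \<Rightarrow> ((nat \<Rightarrow> nat list) \<Rightarrow> mono \<Rightarrow> ratfun) \<Rightarrow> bool" where
  "is_Qt_basis r n b \<longleftrightarrow>
     (\<forall>lam\<in>multipart r n. b lam \<in> XiQt r n)
   \<and> (\<forall>c. (\<forall>lam\<in>multipart r n. c lam \<in> Qt r) \<longrightarrow>
          (\<forall>\<alpha>. (\<Sum>lam\<in>multipart r n. c lam * b lam \<alpha>) = 0) \<longrightarrow>
          (\<forall>lam\<in>multipart r n. c lam = 0))
   \<and> (\<forall>f\<in>XiQt r n. \<exists>c. (\<forall>lam\<in>multipart r n. c lam \<in> Qt r) \<and>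
          (\<forall>\<alpha>. f \<alpha> = (\<Sum>lam\<in>multipart r n. c lam * b lam \<alpha>)))"

end

(*
  Specialise every parameter t_k to one variable X.  Then q^{\<pm>}_\<lambda> becomes a series with
  coefficients in Q[X] of degree at most n, and the coefficient of X^n is (-1)^n times the
  product e_\<lambda> of the elementary symmetric functions e_{\<lambda>^(k)_i}(x^(k\<mp>1)).  Test it on the
  monomial m_\<mu> whose exponents in the family x^(k\<mp>1) form the conjugate of \<mu>^(k), i.e. the
  sum of the 0/1 monomials of the rows of the Young diagram of \<mu>^(k).  e_\<lambda>(m_\<lambda>) > 0, and if
  e_\<lambda>(m_\<mu>) \<noteq> 0 then m_\<mu> is a sum of 0/1 monomials D_i of the sizes of the parts of \<lambda>, so its
  weight \<Sum>\<^sub>v m_\<mu>(v)\<^sup>2 = \<Sum>\<^sub>i\<^sub>j |D_i \<inter> D_j| is at most that of m_\<lambda>; equality forces the D_i to be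
  nested, hence to be the rows of the Young diagram of \<lambda>, so \<mu> = \<lambda>.  Thus the matrix
  (e_\<lambda>(m_\<mu>)) is triangular with nonzero diagonal, the determinant of (q_\<lambda>(m_\<mu>)) is nonzero and
  the q_\<lambda> are linearly independent over Q(t).  A symmetric series of degree n is determined by
  its coefficients at the monomials x^\<mu>, \<mu> \<in> P_{n,r}, so independence already gives a basis,
  and the adjugate puts the coordinates in Q(t).
*)

theory Submission
  imports Defs "Jordan_Normal_Form.Determinant"
begin

lemma finite_mono_divisors:
  assumes "finite {v. \<alpha> v \<noteq> 0}"
  shows "finite {\<beta>::mono. \<forall>v. \<beta> v \<le> \<alpha> v}"
proof -
  let ?S = "{v. \<alpha> v \<noteq> 0}"
  have "{\<beta>::mono. \<forall>v. \<beta> v \<le> \<alpha> v}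
      \<subseteq> {f. \<forall>x. (x \<in> ?S \<longrightarrow> f x \<in> {..sum \<alpha> ?S}) \<and> (x \<notin> ?S \<longrightarrow> f x = 0)}"
  proof (intro subsetI CollectI allI conjI impI)
    fix \<beta> :: mono and x
    assume "\<beta> \<in> {\<beta>. \<forall>v. \<beta> v \<le> \<alpha> v}"
    then have le: "\<beta> x \<le> \<alpha> x" by blast
    then show "x \<notin> ?S \<Longrightarrow> \<beta> x = 0" by simp
    have "x \<in> ?S \<Longrightarrow> \<alpha> x \<le> sum \<alpha> ?S"
      using assms by (intro member_le_sum) auto
    then show "x \<in> ?S \<Longrightarrow> \<beta> x \<in> {..sum \<alpha> ?S}"
      using le by simp
  qed
  moreover have "finite {f::mono. \<forall>x. (x \<in> ?S \<longrightarrow> f x \<in> {..sum \<alpha> ?S}) \<and> (x \<notin> ?S \<longrightarrow> f x = 0)}"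
    using assms by (intro finite_set_of_finite_funs) auto
  ultimately show ?thesis
    by (rule finite_subset)
qed

lemma ser_mult_neq_zeroE:
  assumes "ser_mult F G \<alpha> \<noteq> 0"
  obtains \<beta> where "\<forall>v. \<beta> v \<le> \<alpha> v" "F \<beta> \<noteq> 0" "G (\<lambda>v. \<alpha> v - \<beta> v) \<noteq> 0"
  using assms unfolding ser_mult_def
  by (metis (mono_tags, lifting) mem_Collect_eq mult_not_zero sum.not_neutral_contains_not_neutral)

lemma ser_prod_Nil [simp]: "ser_prod [] = ser_one"
  by (simp add: ser_prod_def)

lemma ser_prod_Cons [simp]: "ser_prod (F # Fs) = ser_mult F (ser_prod Fs)"
  by (simp add: ser_prod_def)

lemma ser_mult_scale_left: "ser_mult (\<lambda>\<alpha>. c * F \<alpha>) G \<alpha> = c * ser_mult F G \<alpha>"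
  unfolding ser_mult_def by (simp add: sum_distrib_left mult.assoc)

lemma ser_prod_scale:
  "ser_prod (map (\<lambda>x \<alpha>. c x * F x \<alpha>) xs) \<alpha> = prod_list (map c xs) * ser_prod (map F xs) \<alpha>"
proof (induction xs arbitrary: \<alpha>)
  case (Cons x xs)
  then have "ser_prod (map (\<lambda>x \<alpha>. c x * F x \<alpha>) xs) = (\<lambda>\<alpha>. prod_list (map c xs) * ser_prod (map F xs) \<alpha>)"
    by (simp add: fun_eq_iff)
  then show ?case
    by (simp add: ser_mult_scale_left ser_mult_def sum_distrib_left mult_ac)
qed simp

lemma ser_mult_one_right:
  assumes "\<And>\<beta>. F \<beta> \<noteq> 0 \<Longrightarrow> finite {v. \<beta> v \<noteq> 0}"
  shows "ser_mult F ser_one \<alpha> = F \<alpha>"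
proof (cases "finite {\<beta>::mono. \<forall>v. \<beta> v \<le> \<alpha> v}")
  case True
  have "(\<forall>v. \<alpha> v - \<beta> v = 0) \<longleftrightarrow> \<beta> = \<alpha>" if "\<forall>v. \<beta> v \<le> \<alpha> v" for \<beta> :: mono
    using that by (auto simp: fun_eq_iff simp del: split_paired_All intro: antisym)
  then have "ser_mult F ser_one \<alpha> = (\<Sum>\<beta>\<in>{\<beta>. \<forall>v. \<beta> v \<le> \<alpha> v}. if \<beta> = \<alpha> then F \<alpha> else 0)"
    unfolding ser_mult_def ser_one_def by (intro sum.cong refl) auto
  also have "\<dots> = F \<alpha>"
    using True by (simp add: sum.delta')
  finally show ?thesis .
next
  case False
  then have "F \<alpha> = 0"
    using assms finite_mono_divisors by blast
  with False show ?thesis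
    unfolding ser_mult_def by simp
qed

lemma ser_mult_comp_bij:
  assumes "bij g"
  shows "ser_mult F G (\<alpha> \<circ> g) = ser_mult (\<lambda>\<beta>. F (\<beta> \<circ> g)) (\<lambda>\<beta>. G (\<beta> \<circ> g)) \<alpha>"
  unfolding ser_mult_def
proof (rule sum.reindex_bij_witness[where i = "\<lambda>\<beta>. \<beta> \<circ> g" and j = "\<lambda>\<beta>. \<beta> \<circ> Hilbert_Choice.inv g"])
  have gi: "g (Hilbert_Choice.inv g v) = v" "Hilbert_Choice.inv g (g v) = v" for v
    using assms by (simp_all add: bij_def surj_f_inv_f inv_f_f)
  fix \<beta> :: mono
  show "\<beta> \<circ> Hilbert_Choice.inv g \<circ> g = \<beta>" "\<beta> \<circ> g \<circ> Hilbert_Choice.inv g = \<beta>"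
    by (simp_all add: fun_eq_iff gi)
  show "\<beta> \<circ> Hilbert_Choice.inv g \<in> {\<beta>. \<forall>v. \<beta> v \<le> \<alpha> v}" if "\<beta> \<in> {\<beta>. \<forall>v. \<beta> v \<le> (\<alpha> \<circ> g) v}"
  proof (intro CollectI allI)
    fix v
    have "\<beta> (Hilbert_Choice.inv g v) \<le> \<alpha> (g (Hilbert_Choice.inv g v))"
      using that by (simp del: split_paired_All)
    then show "(\<beta> \<circ> Hilbert_Choice.inv g) v \<le> \<alpha> v"
      by (simp add: gi)
  qed
  show "\<beta> \<circ> g \<in> {\<beta>. \<forall>v. \<beta> v \<le> (\<alpha> \<circ> g) v}" if "\<beta> \<in> {\<beta>. \<forall>v. \<beta> v \<le> \<alpha> v}"
    using that by (simp del: split_paired_All)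
  show "F (\<beta> \<circ> Hilbert_Choice.inv g \<circ> g) * G ((\<lambda>v. \<alpha> v - (\<beta> \<circ> Hilbert_Choice.inv g) v) \<circ> g) = F \<beta> * G (\<lambda>v. (\<alpha> \<circ> g) v - \<beta> v)"
    by (simp add: comp_def gi)
qed

lemma ser_prod_neq_zeroE:
  assumes "ser_prod Fs \<alpha> \<noteq> 0"
  obtains bs where "length bs = length Fs" "\<forall>i<length Fs. (Fs ! i) (bs ! i) \<noteq> 0"
    "\<forall>v. \<alpha> v = (\<Sum>i<length Fs. (bs ! i) v)"
  using assms
proof (induction Fs arbitrary: \<alpha> thesis)
  case Nil
  then have "\<forall>v. \<alpha> v = 0"
    by (simp add: ser_one_def split: if_splits)
  then show ?case
    using Nil(1)[of "[]"] by simp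
next
  case (Cons F Fs)
  obtain \<beta> where \<beta>: "\<forall>v. \<beta> v \<le> \<alpha> v" "F \<beta> \<noteq> 0" "ser_prod Fs (\<lambda>v. \<alpha> v - \<beta> v) \<noteq> 0"
    using Cons.prems(2) by (auto elim: ser_mult_neq_zeroE)
  obtain bs where bs: "length bs = length Fs" "\<forall>i<length Fs. (Fs ! i) (bs ! i) \<noteq> 0"
    "\<forall>v. \<alpha> v - \<beta> v = (\<Sum>i<length Fs. (bs ! i) v)"
    using Cons.IH[OF _ \<beta>(3)] by blast
  show ?case
  proof (rule Cons.prems(1)[of "\<beta> # bs"])
    show "\<forall>i<length (F # Fs). ((F # Fs) ! i) ((\<beta> # bs) ! i) \<noteq> 0"
      using \<beta>(2) bs(2) by (simp add: nth_Cons split: nat.split)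
    show "\<forall>v. \<alpha> v = (\<Sum>i<length (F # Fs). ((\<beta> # bs) ! i) v)"
    proof
      fix v
      have "(\<Sum>i<length (F # Fs). ((\<beta> # bs) ! i) v) = \<beta> v + (\<alpha> v - \<beta> v)"
        using bs(3) by (simp only: length_Cons sum.lessThan_Suc_shift nth_Cons_0 nth_Cons_Suc)
      then show "\<alpha> v = (\<Sum>i<length (F # Fs). ((\<beta> # bs) ! i) v)"
        using \<beta>(1) by simp
    qed
  qed (use bs(1) in simp)
qed

lemma ser_prod_nonneg: "(\<And>F \<beta>. F \<in> set Fs \<Longrightarrow> F \<beta> \<ge> (0::'a::linordered_idom)) \<Longrightarrow> ser_prod Fs \<alpha> \<ge> 0"
  by (induction Fs arbitrary: \<alpha>) (auto simp: ser_one_def ser_mult_def intro!: sum_nonneg)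

lemma ser_prod_pos:
  assumes "\<And>F \<beta>. F \<in> set Fs \<Longrightarrow> F \<beta> \<ge> (0::'a::linordered_idom)"
    and "length bs = length Fs" "\<forall>i<length Fs. (Fs ! i) (bs ! i) > 0"
    and "finite {v. \<alpha> v \<noteq> 0}" "\<forall>v. \<alpha> v = (\<Sum>i<length Fs. (bs ! i) v)"
  shows "ser_prod Fs \<alpha> > 0"
  using assms
proof (induction Fs arbitrary: \<alpha> bs)
  case Nil
  then have "\<alpha> = (\<lambda>v. 0)"
    by auto
  then show ?case
    by (simp add: ser_one_def)
next
  case (Cons F Fs)
  obtain \<beta> bs' where bs: "bs = \<beta> # bs'"
    using Cons.prems(2) by (cases bs) auto
  let ?\<alpha>' = "\<lambda>v. \<alpha> v - \<beta> v"
  have \<alpha>: "\<alpha> v = \<beta> v + (\<Sum>i<length Fs. (bs' ! i) v)" for v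
    using Cons.prems(5) unfolding bs
    by (simp only: length_Cons sum.lessThan_Suc_shift nth_Cons_0 nth_Cons_Suc)
  have "ser_prod Fs ?\<alpha>' > 0"
  proof (rule Cons.IH)
    show "finite {v. ?\<alpha>' v \<noteq> 0}"
      by (rule finite_subset[OF _ Cons.prems(4)]) auto
  qed (use Cons.prems \<alpha> bs in auto)
  moreover have "F \<beta> > 0"
    using Cons.prems(3) bs by auto
  ultimately have "F \<beta> * ser_prod Fs ?\<alpha>' > 0"
    by simp
  also have "F \<beta> * ser_prod Fs ?\<alpha>' \<le> (\<Sum>\<gamma> | \<forall>v. \<gamma> v \<le> \<alpha> v. F \<gamma> * ser_prod Fs (\<lambda>v. \<alpha> v - \<gamma> v))"
    using Cons.prems(1) ser_prod_nonneg[of Fs] \<alpha> finite_mono_divisors[OF Cons.prems(4)]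
    by (intro member_le_sum) auto
  finally show ?case
    by (simp add: ser_mult_def)
qed

lemma (in comm_ring_hom) hom_ser_mult: "hom (ser_mult F G \<alpha>) = ser_mult (hom \<circ> F) (hom \<circ> G) \<alpha>"
  unfolding ser_mult_def by (simp add: hom_distribs)

lemma (in comm_ring_hom) hom_ser_prod: "hom (ser_prod Fs \<alpha>) = ser_prod (map (\<lambda>F \<beta>. hom (F \<beta>)) Fs) \<alpha>"
proof (induction Fs arbitrary: \<alpha>)
  case Nil
  then show ?case by (simp add: ser_one_def)
next
  case (Cons F Fs)
  then have "hom \<circ> ser_prod Fs = ser_prod (map (\<lambda>F \<beta>. hom (F \<beta>)) Fs)"
    by (simp add: fun_eq_iff)
  then show ?case
    by (simp add: hom_ser_mult comp_def)
qed

lemma (in comm_ring_hom) hom_comp_e_ser [simp]: "hom \<circ> e_ser k j = e_ser k j"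
  by (simp add: e_ser_def fun_eq_iff)

lemma (in comm_ring_hom) hom_comp_h_ser [simp]: "hom \<circ> h_ser k j = h_ser k j"
  by (simp add: h_ser_def fun_eq_iff)

lemma (in comm_ring_hom) hom_q_ser: "hom (q_ser k k' t s \<alpha>) = q_ser k k' (hom t) s \<alpha>"
  unfolding q_ser_def by (simp add: hom_distribs hom_ser_mult)

lemma h_ser_zero: "h_ser k 0 = ser_one"
proof
  fix \<gamma> :: mono
  have "in_fam k \<gamma> \<and> mdeg \<gamma> = 0 \<longleftrightarrow> \<gamma> = (\<lambda>_. 0)"
  proof
    assume "in_fam k \<gamma> \<and> mdeg \<gamma> = 0"
    then have "finite {v. \<gamma> v \<noteq> 0}" "sum \<gamma> {v. \<gamma> v \<noteq> 0} = 0"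
      unfolding in_fam_def mdeg_def by simp_all
    then have "\<forall>v\<in>{v. \<gamma> v \<noteq> 0}. \<gamma> v = 0"
      using sum_eq_0_iff by blast
    then show "\<gamma> = (\<lambda>_. 0)"
      by blast
  next
    assume "\<gamma> = (\<lambda>_. 0)"
    then show "in_fam k \<gamma> \<and> mdeg \<gamma> = 0"
      unfolding in_fam_def mdeg_def by simp
  qed
  then show "h_ser k 0 \<gamma> = ser_one \<gamma>"
    unfolding h_ser_def ser_one_def by (simp add: fun_eq_iff del: split_paired_All)
qed

definition tagged_parts :: "nat \<Rightarrow> (nat \<Rightarrow> nat list) \<Rightarrow> (nat \<times> nat) list" where
  "tagged_parts r lam = concat (map (\<lambda>k. map (Pair k) (lam k)) [1..<r+1])"

definition q_prod :: "nat \<Rightarrow> (nat \<Rightarrow> nat) \<Rightarrow> (nat \<Rightarrow> 'a) \<Rightarrow> (nat \<Rightarrow> nat list) \<Rightarrow> mono \<Rightarrow> 'a::comm_ring_1"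
  where "q_prod r \<phi> T lam = ser_prod (map (\<lambda>(k, s). q_ser k (\<phi> k) (T k) s) (tagged_parts r lam))"

lemma qplus_eq_q_prod: "qplus r = q_prod r (\<lambda>k. fam r (int k - 1)) (\<lambda>k. tt r (int k - 1))"
  unfolding qplus_def q_prod_def tagged_parts_def by (simp add: map_concat comp_def fun_eq_iff)

lemma qminus_eq_q_prod: "qminus r = q_prod r (\<lambda>k. fam r (int k + 1)) (\<lambda>k. tt r (int k))"
  unfolding qminus_def q_prod_def tagged_parts_def by (simp add: map_concat comp_def fun_eq_iff)

lemma (in comm_ring_hom) hom_q_prod: "hom (q_prod r \<phi> T lam \<alpha>) = q_prod r \<phi> (hom \<circ> T) lam \<alpha>"
  unfolding q_prod_def hom_ser_prod by (simp add: comp_def case_prod_unfold hom_q_ser)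

lemma tagged_parts_memD: "(k, s) \<in> set (tagged_parts r lam) \<Longrightarrow> k \<in> {1..r} \<and> s \<in> set (lam k)"
  unfolding tagged_parts_def by auto

lemma sum_list_tagged_parts: "sum_list (map snd (tagged_parts r lam)) = (\<Sum>k=1..r. sum_list (lam k))"
proof -
  have "sum_list (map snd (tagged_parts r lam)) = sum_list (map (\<lambda>k. sum_list (lam k)) [1..<r+1])"
    unfolding tagged_parts_def by (induction r) (simp_all add: comp_def)
  also have "\<dots> = (\<Sum>k=1..r. sum_list (lam k))"
    by (metis atLeastLessThanSuc_atLeastAtMost Suc_eq_plus1 set_upt sum_set_upt_conv_sum_list_nat)
  finally show ?thesis .
qed

lemma card_tagged_parts_filter:
  assumes "k \<in> {1..r}"
  shows "card {i. i < length (tagged_parts r lam) \<and> fst (tagged_parts r lam ! i) = k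
                  \<and> Q (snd (tagged_parts r lam ! i))}
         = length (filter Q (lam k))"
proof -
  have "filter (\<lambda>x. fst x = k \<and> Q (snd x)) (tagged_parts r lam)
      = (if k \<in> {1..r} then map (Pair k) (filter Q (lam k)) else [])"
  proof (induction r)
    case (Suc r)
    have "filter (\<lambda>x. fst x = k \<and> Q (snd x)) (tagged_parts r lam) = []" if "k = Suc r"
      using that by (auto simp: filter_empty_conv dest: tagged_parts_memD)
    then show ?case
      using Suc by (auto simp: tagged_parts_def filter_map comp_def le_Suc_eq)
  qed (simp add: tagged_parts_def)
  then have "length (filter (\<lambda>x. fst x = k \<and> Q (snd x)) (tagged_parts r lam)) = length (filter Q (lam k))"
    using assms by simp
  then show ?thesis
    by (simp add: length_filter_conv_card)
qed

lemma fam_in_range: assumes "r > 0" shows "fam r k \<in> {1..r}"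
proof -
  have "0 \<le> (k - 1) mod int r" "(k - 1) mod int r < int r"
    using assms by auto
  then show ?thesis unfolding fam_def by auto
qed

lemma inj_on_fam_shift:
  assumes "r > 0"
  shows "inj_on (\<lambda>k. fam r (int k + a)) {1..r}"
proof
  fix k k'
  assume k: "k \<in> {1..r}" "k' \<in> {1..r}" and "fam r (int k + a) = fam r (int k' + a)"
  then have "(int k + a - 1) mod int r = (int k' + a - 1) mod int r"
    using assms unfolding fam_def by (simp add: nat_eq_iff2)
  then have "int r dvd int k - int k'"
    by (simp add: mod_eq_dvd_iff)
  moreover have "\<bar>int k - int k'\<bar> < int r"
    using k by auto
  ultimately show "k = k'"
    using dvd_imp_le_int[of "int k - int k'" "int r"] by fastforce
qed

lemma fam_tagged_parts_eq_iff:
  assumes "inj_on \<phi> {1..r}" "k \<in> {1..r}" "x \<in> set (tagged_parts r lam)"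
  shows "\<phi> (fst x) = \<phi> k \<longleftrightarrow> fst x = k"
  using assms tagged_parts_memD[of "fst x" "snd x" r lam] by (auto dest: inj_onD)

lemma pvars_zero [simp]: "pvars 0 = {}"
  by (simp add: pvars_def)

lemma pvars_one [simp]: "pvars 1 = {}"
  by (simp add: pvars_def)

lemma pvars_uminus [simp]: "pvars (- p) = pvars p"
  by (simp add: pvars_def)

lemma pvars_add: "pvars (p + q) \<subseteq> pvars p \<union> pvars q"
  unfolding pvars_def using keys_add[of p q] by auto

lemma pvars_mult: "pvars (p * q) \<subseteq> pvars p \<union> pvars q"
proof
  fix x
  assume "x \<in> pvars (p * q)"
  then obtain m where "m \<in> Poly_Mapping.keys (p * q)" "x \<in> Poly_Mapping.keys m"
    unfolding pvars_def by auto
  moreover from this(1) obtain a b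
    where "a \<in> Poly_Mapping.keys p" "b \<in> Poly_Mapping.keys q" "m = a + b"
    using keys_mult[of p q] by auto
  ultimately show "x \<in> pvars p \<union> pvars q"
    using keys_add[of a b] unfolding pvars_def by auto
qed

lemma QtI: "q \<noteq> 0 \<Longrightarrow> pvars p \<subseteq> {1..r} \<Longrightarrow> pvars q \<subseteq> {1..r} \<Longrightarrow> Fract p q \<in> Qt r"
  unfolding Qt_def by blast

lemma QtE:
  assumes "x \<in> Qt r"
  obtains p q where "x = Fract p q" "q \<noteq> 0" "pvars p \<subseteq> {1..r}" "pvars q \<subseteq> {1..r}"
  using assms unfolding Qt_def by blast

lemma Qt_one [simp]: "1 \<in> Qt r"
  by (simp add: One_fract_def QtI)

lemma Qt_zero [simp]: "0 \<in> Qt r"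
  by (simp add: Zero_fract_def QtI)

lemma Qt_add: assumes "x \<in> Qt r" "y \<in> Qt r" shows "x + y \<in> Qt r"
proof -
  obtain a b where x: "x = Fract a b" "b \<noteq> 0" "pvars a \<subseteq> {1..r}" "pvars b \<subseteq> {1..r}"
    using assms(1) by (rule QtE)
  obtain c d where y: "y = Fract c d" "d \<noteq> 0" "pvars c \<subseteq> {1..r}" "pvars d \<subseteq> {1..r}"
    using assms(2) by (rule QtE)
  have "pvars (a * d + c * b) \<subseteq> {1..r}" "pvars (b * d) \<subseteq> {1..r}"
    using pvars_add[of "a * d" "c * b"] pvars_mult[of a d] pvars_mult[of c b] pvars_mult[of b d] x y
    by blast+
  then show ?thesis
    using x y by (auto intro!: QtI)
qed

lemma Qt_mult: assumes "x \<in> Qt r" "y \<in> Qt r" shows "x * y \<in> Qt r"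
proof -
  obtain a b where x: "x = Fract a b" "b \<noteq> 0" "pvars a \<subseteq> {1..r}" "pvars b \<subseteq> {1..r}"
    using assms(1) by (rule QtE)
  obtain c d where y: "y = Fract c d" "d \<noteq> 0" "pvars c \<subseteq> {1..r}" "pvars d \<subseteq> {1..r}"
    using assms(2) by (rule QtE)
  have "pvars (a * c) \<subseteq> {1..r}" "pvars (b * d) \<subseteq> {1..r}"
    using pvars_mult[of a c] pvars_mult[of b d] x y by blast+
  then show ?thesis
    using x y by (auto intro!: QtI)
qed

lemma Qt_uminus: "x \<in> Qt r \<Longrightarrow> - x \<in> Qt r"
  by (erule QtE) (auto intro!: QtI)

lemma Qt_inverse: assumes "x \<in> Qt r" shows "inverse x \<in> Qt r"
proof -
  obtain a b where x: "x = Fract a b" "b \<noteq> 0" "pvars a \<subseteq> {1..r}" "pvars b \<subseteq> {1..r}"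
    using assms by (rule QtE)
  show ?thesis
  proof (cases "a = 0")
    case True
    then have "x = 0" using x by (simp add: Zero_fract_def eq_fract)
    then show ?thesis by simp
  next
    case False
    then show ?thesis using x by (auto intro!: QtI)
  qed
qed

lemma Qt_sum: "(\<And>i. i \<in> A \<Longrightarrow> f i \<in> Qt r) \<Longrightarrow> sum f A \<in> Qt r"
  by (induction A rule: infinite_finite_induct) (auto intro: Qt_add)

lemma Qt_prod: "(\<And>i. i \<in> A \<Longrightarrow> f i \<in> Qt r) \<Longrightarrow> prod f A \<in> Qt r"
  by (induction A rule: infinite_finite_induct) (auto intro: Qt_mult)

lemma Qt_power: "x \<in> Qt r \<Longrightarrow> x ^ n \<in> Qt r"
  by (induction n) (auto intro: Qt_mult)

lemma tt_in_Qt: "r > 0 \<Longrightarrow> tt r k \<in> Qt r"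
  using fam_in_range[of r k] unfolding tt_def tvar_def by (intro QtI) (auto simp: pvars_def)

lemma ser_mult_in_Qt: "(\<And>\<beta>. F \<beta> \<in> Qt r) \<Longrightarrow> (\<And>\<beta>. G \<beta> \<in> Qt r) \<Longrightarrow> ser_mult F G \<alpha> \<in> Qt r"
  unfolding ser_mult_def by (intro Qt_sum Qt_mult)

lemma ser_prod_in_Qt: "(\<And>F \<beta>. F \<in> set Fs \<Longrightarrow> F \<beta> \<in> Qt r) \<Longrightarrow> ser_prod Fs \<alpha> \<in> Qt r"
  by (induction Fs arbitrary: \<alpha>) (simp_all add: ser_one_def ser_mult_in_Qt)

lemma q_ser_in_Qt: "t \<in> Qt r \<Longrightarrow> q_ser k k' t s \<alpha> \<in> Qt r"
  unfolding q_ser_def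
  by (intro Qt_sum Qt_mult Qt_power Qt_uminus ser_mult_in_Qt) (auto simp: e_ser_def h_ser_def)

lemma q_prod_in_Qt: "(\<And>k. T k \<in> Qt r) \<Longrightarrow> q_prod r' \<phi> T lam \<alpha> \<in> Qt r"
  unfolding q_prod_def by (intro ser_prod_in_Qt) (auto intro!: q_ser_in_Qt)

definition homogeneous :: "nat \<Rightarrow> nat \<Rightarrow> (mono \<Rightarrow> 'a::zero) \<Rightarrow> bool" where
  "homogeneous r d F \<longleftrightarrow> (\<forall>\<alpha>. F \<alpha> \<noteq> 0 \<longrightarrow> mono_ok r \<alpha> \<and> mdeg \<alpha> = d)"

lemma mdeg_superset: "finite S \<Longrightarrow> {v. \<alpha> v \<noteq> 0} \<subseteq> S \<Longrightarrow> mdeg \<alpha> = sum \<alpha> S"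
  unfolding mdeg_def by (rule sum.mono_neutral_left) auto

lemma mono_ok_add: "mono_ok r \<beta> \<Longrightarrow> mono_ok r \<gamma> \<Longrightarrow> mono_ok r (\<lambda>v. \<beta> v + \<gamma> v)"
  unfolding mono_ok_def by (auto simp del: split_paired_All)

lemma mdeg_add:
  assumes "finite {v. \<beta> v \<noteq> 0}" "finite {v. \<gamma> v \<noteq> 0}"
  shows "mdeg (\<lambda>v. \<beta> v + \<gamma> v) = mdeg \<beta> + mdeg \<gamma>"
proof -
  let ?S = "{v. \<beta> v \<noteq> 0} \<union> {v. \<gamma> v \<noteq> 0}"
  have "finite ?S" using assms by simp
  then show ?thesis
    by (simp add: mdeg_superset[of ?S] sum.distrib subset_iff)
qed

lemma homogeneous_ser_mult:
  assumes "homogeneous r a F" "homogeneous r b G"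
  shows "homogeneous r (a + b) (ser_mult F G)"
  unfolding homogeneous_def
proof (intro allI impI)
  fix \<alpha>
  assume "ser_mult F G \<alpha> \<noteq> 0"
  then obtain \<beta> where \<beta>: "\<forall>v. \<beta> v \<le> \<alpha> v" "F \<beta> \<noteq> 0" "G (\<lambda>v. \<alpha> v - \<beta> v) \<noteq> 0"
    by (rule ser_mult_neq_zeroE)
  have ok: "mono_ok r \<beta>" "mono_ok r (\<lambda>v. \<alpha> v - \<beta> v)"
    and deg: "mdeg \<beta> = a" "mdeg (\<lambda>v. \<alpha> v - \<beta> v) = b"
    using assms \<beta>(2,3) unfolding homogeneous_def by auto
  have "(\<lambda>v. \<beta> v + (\<alpha> v - \<beta> v)) = \<alpha>"
    using \<beta>(1) by (auto simp: fun_eq_iff)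
  moreover have "mono_ok r (\<lambda>v. \<beta> v + (\<alpha> v - \<beta> v))"
    using ok by (rule mono_ok_add)
  moreover have "mdeg (\<lambda>v. \<beta> v + (\<alpha> v - \<beta> v)) = a + b"
    using ok deg by (simp add: mdeg_add mono_ok_def)
  ultimately show "mono_ok r \<alpha> \<and> mdeg \<alpha> = a + b"
    by simp
qed

lemma homogeneous_ser_one: "homogeneous r 0 ser_one"
proof -
  have "ser_one \<alpha> \<noteq> 0 \<Longrightarrow> \<alpha> = (\<lambda>_. 0)" for \<alpha> :: mono
    by (auto simp: ser_one_def fun_eq_iff split: if_splits)
  moreover have "mono_ok r (\<lambda>_. 0) \<and> mdeg (\<lambda>_::nat \<times> nat. 0::nat) = 0"
    by (simp add: mono_ok_def mdeg_def)
  ultimately show ?thesis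
    unfolding homogeneous_def by auto
qed

lemma homogeneous_ser_prod:
  "(\<And>F d. (F, d) \<in> set xs \<Longrightarrow> homogeneous r d F) \<Longrightarrow>
   homogeneous r (sum_list (map snd xs)) (ser_prod (map fst xs))"
  by (induction xs) (auto simp: homogeneous_ser_one homogeneous_ser_mult)

lemma homogeneous_lincomb:
  fixes F :: "'i \<Rightarrow> mono \<Rightarrow> 'a::comm_ring_1"
  assumes "\<And>i. i \<in> A \<Longrightarrow> homogeneous r d (F i)"
  shows "homogeneous r d (\<lambda>\<alpha>. \<Sum>i\<in>A. c i * F i \<alpha>)"
  unfolding homogeneous_def
proof (intro allI impI)
  fix \<alpha>
  assume "(\<Sum>i\<in>A. c i * F i \<alpha>) \<noteq> 0"
  then obtain i where "i \<in> A" "c i * F i \<alpha> \<noteq> 0"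
    by (rule sum.not_neutral_contains_not_neutral)
  then have "F i \<alpha> \<noteq> 0"
    by auto
  with \<open>i \<in> A\<close> show "mono_ok r \<alpha> \<and> mdeg \<alpha> = d"
    using assms unfolding homogeneous_def by auto
qed

lemma homogeneous_diff:
  fixes F G :: "mono \<Rightarrow> 'a::ab_group_add"
  assumes "homogeneous r d F" "homogeneous r d G"
  shows "homogeneous r d (\<lambda>\<alpha>. F \<alpha> - G \<alpha>)"
  unfolding homogeneous_def
proof (intro allI impI)
  fix \<alpha>
  assume "F \<alpha> - G \<alpha> \<noteq> 0"
  then have "F \<alpha> \<noteq> 0 \<or> G \<alpha> \<noteq> 0"
    by auto
  then show "mono_ok r \<alpha> \<and> mdeg \<alpha> = d"
    using assms unfolding homogeneous_def by blast
qed

lemma homogeneous_e_ser: "k \<in> {1..r} \<Longrightarrow> homogeneous r j (e_ser k j)"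
  unfolding homogeneous_def e_ser_def in_fam_def mono_ok_def by auto

lemma homogeneous_h_ser: "k \<in> {1..r} \<Longrightarrow> homogeneous r j (h_ser k j)"
  unfolding homogeneous_def h_ser_def in_fam_def mono_ok_def by auto

lemma homogeneous_q_ser:
  assumes "k \<in> {1..r}" "k' \<in> {1..r}"
  shows "homogeneous r s (q_ser k k' t s)"
proof -
  have "homogeneous r s (ser_mult (e_ser k' j) (h_ser k (s - j)))" if "j \<le> s" for j
    using homogeneous_ser_mult[OF homogeneous_e_ser[OF assms(2)] homogeneous_h_ser[OF assms(1)], of j "s - j"]
      that by simp
  then have "homogeneous r s (\<lambda>\<alpha>. \<Sum>j\<in>{0..s}. (- t) ^ j * ser_mult (e_ser k' j) (h_ser k (s - j)) \<alpha>)"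
    by (intro homogeneous_lincomb) auto
  then show ?thesis
    unfolding q_ser_def[abs_def] .
qed

lemma homogeneous_q_prod:
  assumes "\<And>k. k \<in> {1..r} \<Longrightarrow> \<phi> k \<in> {1..r}" "lam \<in> multipart r n"
  shows "homogeneous r n (q_prod r \<phi> T lam)"
proof -
  let ?xs = "map (\<lambda>(k, s). (q_ser k (\<phi> k) (T k) s, s)) (tagged_parts r lam)"
  have "homogeneous r (sum_list (map snd ?xs)) (ser_prod (map fst ?xs))"
    by (rule homogeneous_ser_prod) (auto dest!: tagged_parts_memD intro!: homogeneous_q_ser assms(1))
  moreover have "map snd ?xs = map snd (tagged_parts r lam)"
    by (auto simp: case_prod_unfold)
  ultimately show ?thesis
    using assms(2) unfolding multipart_def q_prod_def
    by (simp add: sum_list_tagged_parts comp_def case_prod_unfold)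
qed

definition permute_var :: "(nat \<Rightarrow> nat \<Rightarrow> nat) \<Rightarrow> nat \<times> nat \<Rightarrow> nat \<times> nat" where
  "permute_var \<pi> = (\<lambda>(k, i). (k, \<pi> k i))"

definition symmetric_ser :: "(mono \<Rightarrow> 'a) \<Rightarrow> bool" where
  "symmetric_ser F \<longleftrightarrow> (\<forall>\<pi>. (\<forall>k. bij (\<pi> k)) \<longrightarrow> (\<forall>\<alpha>. F (\<alpha> \<circ> permute_var \<pi>) = F \<alpha>))"

lemma fst_permute_var [simp]: "fst (permute_var \<pi> v) = fst v"
  by (simp add: permute_var_def case_prod_unfold)

lemma bij_permute_var:
  assumes "\<And>k. bij (\<pi> k)"
  shows "bij (permute_var \<pi>)"
proof (rule bij_betw_byWitness[where f' = "permute_var (\<lambda>k. Hilbert_Choice.inv (\<pi> k))"])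
  show "\<forall>v\<in>UNIV. permute_var (\<lambda>k. Hilbert_Choice.inv (\<pi> k)) (permute_var \<pi> v) = v"
    "\<forall>v\<in>UNIV. permute_var \<pi> (permute_var (\<lambda>k. Hilbert_Choice.inv (\<pi> k)) v) = v"
    using assms by (auto simp: permute_var_def bij_def inv_f_f surj_f_inv_f)
qed auto

lemma bij_betw_support_comp:
  assumes "bij g"
  shows "bij_betw g {v. (\<alpha> \<circ> g) v \<noteq> 0} {v. \<alpha> v \<noteq> 0}"
proof -
  have e: "{v. (\<alpha> \<circ> g) v \<noteq> 0} = g -` {v. \<alpha> v \<noteq> 0}"
    by auto
  have "g ` {v. (\<alpha> \<circ> g) v \<noteq> 0} = {v. \<alpha> v \<noteq> 0}"
    unfolding e by (rule surj_image_vimage_eq[OF bij_is_surj[OF assms]])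
  moreover have "inj_on g {v. (\<alpha> \<circ> g) v \<noteq> 0}"
    using bij_is_inj[OF assms] by (rule inj_on_subset) simp
  ultimately show ?thesis
    unfolding bij_betw_def by simp
qed

lemma mdeg_comp_bij: "bij g \<Longrightarrow> mdeg (\<alpha> \<circ> g) = mdeg \<alpha>"
  unfolding mdeg_def using sum.reindex_bij_betw[OF bij_betw_support_comp, of g \<alpha> \<alpha>]
  by (simp add: comp_def)

lemma finite_support_comp_bij: "bij g \<Longrightarrow> finite {v. (\<alpha> \<circ> g) v \<noteq> 0} \<longleftrightarrow> finite {v. \<alpha> v \<noteq> 0}"
  by (rule bij_betw_finite) (rule bij_betw_support_comp)

lemma all_surj_iff:
  assumes "surj g"
  shows "(\<forall>v. Q (g v)) \<longleftrightarrow> (\<forall>w. Q w)"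
proof (intro iffI allI)
  fix w
  assume "\<forall>v. Q (g v)"
  moreover obtain v where "w = g v"
    using surjD[OF assms] by blast
  ultimately show "Q w"
    by simp
qed simp

lemma in_fam_iff: "in_fam k \<alpha> \<longleftrightarrow> finite {v. \<alpha> v \<noteq> 0} \<and> (\<forall>v. \<alpha> v \<noteq> 0 \<longrightarrow> fst v = k)"
  unfolding in_fam_def by auto

lemma in_fam_comp_bij:
  assumes "bij g" "\<And>v. fst (g v) = fst v"
  shows "in_fam k (\<alpha> \<circ> g) \<longleftrightarrow> in_fam k \<alpha>"
proof -
  have "(\<forall>v. (\<alpha> \<circ> g) v \<noteq> 0 \<longrightarrow> fst (g v) = k) \<longleftrightarrow> (\<forall>v. \<alpha> v \<noteq> 0 \<longrightarrow> fst v = k)"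
    using all_surj_iff[OF bij_is_surj[OF assms(1)], of "\<lambda>w. \<alpha> w \<noteq> 0 \<longrightarrow> fst w = k"] by simp
  then show ?thesis
    using assms by (simp only: in_fam_iff finite_support_comp_bij)
qed

lemma symmetric_serI:
  assumes "\<And>g \<alpha>. bij g \<Longrightarrow> (\<And>v. fst (g v) = fst v) \<Longrightarrow> F (\<alpha> \<circ> g) = F \<alpha>"
  shows "symmetric_ser F"
  using assms bij_permute_var unfolding symmetric_ser_def by simp

lemma symmetric_serD: "symmetric_ser F \<Longrightarrow> (\<And>k. bij (\<pi> k)) \<Longrightarrow> F (\<alpha> \<circ> permute_var \<pi>) = F \<alpha>"
  unfolding symmetric_ser_def by blast

lemma symmetric_ser_mult:
  assumes "symmetric_ser F" "symmetric_ser G"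
  shows "symmetric_ser (ser_mult F G)"
  using assms by (simp add: symmetric_ser_def ser_mult_comp_bij bij_permute_var)

lemma symmetric_ser_one: "symmetric_ser ser_one"
proof (rule symmetric_serI)
  fix g :: "nat \<times> nat \<Rightarrow> nat \<times> nat" and \<alpha> :: mono
  assume "bij g"
  then show "ser_one (\<alpha> \<circ> g) = ser_one \<alpha>"
    using all_surj_iff[OF bij_is_surj, of g "\<lambda>w. \<alpha> w = 0"]
    by (simp add: ser_one_def del: split_paired_All)
qed

lemma symmetric_ser_prod: "(\<And>F. F \<in> set Fs \<Longrightarrow> symmetric_ser F) \<Longrightarrow> symmetric_ser (ser_prod Fs)"
  by (induction Fs) (auto simp: symmetric_ser_one symmetric_ser_mult)

lemma symmetric_ser_lincomb:
  "(\<And>i. i \<in> A \<Longrightarrow> symmetric_ser (F i)) \<Longrightarrow> symmetric_ser (\<lambda>\<alpha>. \<Sum>i\<in>A. c i * F i \<alpha>)"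
  unfolding symmetric_ser_def by simp

lemma symmetric_ser_diff:
  "symmetric_ser F \<Longrightarrow> symmetric_ser G \<Longrightarrow> symmetric_ser (\<lambda>\<alpha>. F \<alpha> - G \<alpha>)"
  unfolding symmetric_ser_def by simp

lemma symmetric_e_ser: "symmetric_ser (e_ser k j)"
proof (rule symmetric_serI)
  fix g :: "nat \<times> nat \<Rightarrow> nat \<times> nat" and \<alpha> :: mono
  assume "bij g" "\<And>v. fst (g v) = fst v"
  then show "e_ser k j (\<alpha> \<circ> g) = e_ser k j \<alpha>"
    using all_surj_iff[OF bij_is_surj, of g "\<lambda>w. \<alpha> w \<le> 1"]
    by (simp add: e_ser_def in_fam_comp_bij mdeg_comp_bij del: split_paired_All)
qed

lemma symmetric_h_ser: "symmetric_ser (h_ser k j)"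
  by (rule symmetric_serI) (simp add: h_ser_def in_fam_comp_bij mdeg_comp_bij)

lemma symmetric_q_ser: "symmetric_ser (q_ser k k' t s)"
  unfolding q_ser_def[abs_def]
  by (intro symmetric_ser_lincomb symmetric_ser_mult symmetric_e_ser symmetric_h_ser)

lemma symmetric_q_prod: "symmetric_ser (q_prod r \<phi> T lam)"
  unfolding q_prod_def by (rule symmetric_ser_prod) (auto simp: symmetric_q_ser)

lemma XiQt_iff: "f \<in> XiQt r n \<longleftrightarrow> (\<forall>\<alpha>. f \<alpha> \<in> Qt r) \<and> homogeneous r n f \<and> symmetric_ser f"
proof -
  have "(\<lambda>(k, i). \<alpha> (k, \<pi> k i)) = \<alpha> \<circ> permute_var \<pi>" for \<alpha> :: mono and \<pi>
    by (simp add: fun_eq_iff permute_var_def)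
  then show ?thesis
    unfolding XiQt_def homogeneous_def symmetric_ser_def by (simp only: mem_Collect_eq)
qed

lemma q_prod_in_XiQt:
  assumes "\<And>k. k \<in> {1..r} \<Longrightarrow> \<phi> k \<in> {1..r}" "\<And>k. T k \<in> Qt r" "lam \<in> multipart r n"
  shows "q_prod r \<phi> T lam \<in> XiQt r n"
proof -
  have "homogeneous r n (q_prod r \<phi> T lam)"
    by (rule homogeneous_q_prod) (use assms in auto)
  then show ?thesis
    unfolding XiQt_iff using q_prod_in_Qt[of T, OF assms(2)] symmetric_q_prod by blast
qed

section \<open>Symmetric series are determined by their values at partitions\<close>

definition desc_support :: "(nat \<Rightarrow> nat) \<Rightarrow> nat list" where
  "desc_support g = rev (sort_key g (sorted_list_of_set {i. g i \<noteq> 0}))"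

definition sorting_perm :: "(nat \<Rightarrow> nat) \<Rightarrow> nat \<Rightarrow> nat" where
  "sorting_perm g i =
     (if i < length (desc_support g) then desc_support g ! i
      else enumerate (- {i. g i \<noteq> 0}) (i - length (desc_support g)))"

definition shape :: "mono \<Rightarrow> nat \<Rightarrow> nat list" where
  "shape \<alpha> k = map (\<lambda>i. \<alpha> (k, i)) (desc_support (\<lambda>i. \<alpha> (k, i)))"

definition shape_mono :: "(nat \<Rightarrow> nat list) \<Rightarrow> mono" where
  "shape_mono \<mu> = (\<lambda>(k, i). if i < length (\<mu> k) then \<mu> k ! i else 0)"

lemma
  assumes "finite {i. g i \<noteq> 0}"
  shows distinct_desc_support: "distinct (desc_support g)"
    and set_desc_support: "set (desc_support g) = {i. g i \<noteq> 0}"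
    and sorted_desc_support: "sorted_wrt (\<ge>) (map g (desc_support g))"
proof -
  show "distinct (desc_support g)" "set (desc_support g) = {i. g i \<noteq> 0}"
    unfolding desc_support_def using assms by (simp_all add: distinct_sort set_sort)
  have "sorted (map g (sort_key g (sorted_list_of_set {i. g i \<noteq> 0})))"
    by (rule sorted_sort_key)
  then show "sorted_wrt (\<ge>) (map g (desc_support g))"
    unfolding desc_support_def rev_map[symmetric] sorted_wrt_rev .
qed

lemma bij_sorting_perm:
  assumes fin: "finite {i. g i \<noteq> 0}"
  shows "bij (sorting_perm g)"
proof -
  let ?S = "{i. g i \<noteq> 0}" and ?m = "length (desc_support g)"
  let ?E = "enumerate (- ?S)"
  have inf: "infinite (- ?S)"
    using fin by (simp add: Compl_eq_Diff_UNIV Diff_infinite_finite)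
  have "bij_betw ((!) (desc_support g)) {..<?m} ?S"
    using fin by (intro bij_betw_nth) (simp_all add: distinct_desc_support set_desc_support)
  then have low: "bij_betw (sorting_perm g) {..<?m} ?S"
    by (rule bij_betw_cong[THEN iffD1, rotated]) (simp add: sorting_perm_def)
  have "inj_on (sorting_perm g) {?m..}"
    using strict_mono_enumerate[OF inf] by (auto simp: inj_on_def sorting_perm_def strict_mono_eq)
  moreover have "sorting_perm g ` {?m..} = - ?S"
  proof -
    have shift: "(\<lambda>i. i - ?m) ` {?m..} = UNIV"
      by (auto simp: image_iff intro!: bexI[where x = "_ + ?m"])
    have "sorting_perm g ` {?m..} = (\<lambda>i. ?E (i - ?m)) ` {?m..}"
      by (rule image_cong) (auto simp: sorting_perm_def)
    also have "\<dots> = ?E ` ((\<lambda>i. i - ?m) ` {?m..})"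
      by (simp add: image_image)
    also have "\<dots> = - ?S"
      by (simp only: shift range_enumerate[OF inf])
    finally show ?thesis .
  qed
  ultimately have high: "bij_betw (sorting_perm g) {?m..} (- ?S)"
    by (simp add: bij_betw_def)
  have "bij_betw (sorting_perm g) ({..<?m} \<union> {?m..}) (?S \<union> - ?S)"
    by (rule bij_betw_combine[OF low high]) auto
  moreover have "{..<?m} \<union> {?m..} = UNIV"
    by auto
  ultimately show ?thesis
    by simp
qed

lemma sorting_perm_apply:
  assumes "finite {i. g i \<noteq> 0}"
  shows "g (sorting_perm g i) = (if i < length (desc_support g) then map g (desc_support g) ! i else 0)"
proof -
  have "infinite (- {i. g i \<noteq> 0})"
    using assms by (simp add: Compl_eq_Diff_UNIV Diff_infinite_finite)
  then show ?thesis
    using enumerate_in_set[of "- {i. g i \<noteq> 0}"] by (simp add: sorting_perm_def)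
qed

lemma finite_support_row:
  assumes "finite {v. \<alpha> v \<noteq> 0}"
  shows "finite {i. \<alpha> (k, i) \<noteq> (0::nat)}"
proof -
  have "{i. \<alpha> (k, i) \<noteq> 0} \<subseteq> snd ` {v. \<alpha> v \<noteq> 0}"
    by force
  then show ?thesis
    using assms by (rule finite_subset[OF _ finite_imageI])
qed

lemma comp_permute_sorting_perm:
  assumes "finite {v. \<alpha> v \<noteq> 0}"
  shows "\<alpha> \<circ> permute_var (\<lambda>k. sorting_perm (\<lambda>i. \<alpha> (k, i))) = shape_mono (shape \<alpha>)"
  using sorting_perm_apply[OF finite_support_row[OF assms]]
  by (auto simp: fun_eq_iff permute_var_def shape_mono_def shape_def)

lemma shape_in_multipart:
  assumes ok: "mono_ok r \<alpha>" and deg: "mdeg \<alpha> = n"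
  shows "shape \<alpha> \<in> multipart r n"
proof -
  have fin: "finite {i. \<alpha> (k, i) \<noteq> 0}" for k
    using ok unfolding mono_ok_def by (intro finite_support_row) simp
  have "shape \<alpha> k = []" if "k \<notin> {1..r}" for k
  proof -
    have "{i. \<alpha> (k, i) \<noteq> 0} = {}"
      using ok that unfolding mono_ok_def by auto
    then show ?thesis
      using set_desc_support[OF fin, of k] unfolding shape_def by simp
  qed
  moreover have "sorted_wrt (\<ge>) (shape \<alpha> k) \<and> 0 \<notin> set (shape \<alpha> k)" for k
    using sorted_desc_support[OF fin] set_desc_support[OF fin] unfolding shape_def by auto
  moreover have "(\<Sum>k=1..r. sum_list (shape \<alpha> k)) = n"
  proof -
    have "sum_list (shape \<alpha> k) = (\<Sum>i | \<alpha> (k, i) \<noteq> 0. \<alpha> (k, i))" for k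
      unfolding shape_def
      by (simp add: sum_list_distinct_conv_sum_set distinct_desc_support[OF fin] set_desc_support[OF fin])
    moreover have "{v. \<alpha> v \<noteq> 0} = Sigma {1..r} (\<lambda>k. {i. \<alpha> (k, i) \<noteq> 0})"
      using ok unfolding mono_ok_def by auto
    then have "mdeg \<alpha> = (\<Sum>k=1..r. \<Sum>i | \<alpha> (k, i) \<noteq> 0. \<alpha> (k, i))"
      unfolding mdeg_def using fin by (simp add: sum.Sigma case_prod_beta')
    ultimately show ?thesis
      using deg by simp
  qed
  ultimately show ?thesis
    unfolding multipart_def by blast
qed

lemma symmetric_homogeneous_eq_zero:
  assumes "symmetric_ser f" "homogeneous r n f" "\<forall>\<mu>\<in>multipart r n. f (shape_mono \<mu>) = 0"
  shows "f \<alpha> = 0"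
proof (rule ccontr)
  assume "f \<alpha> \<noteq> 0"
  then have ok: "mono_ok r \<alpha>" "mdeg \<alpha> = n"
    using assms(2) unfolding homogeneous_def by auto
  then have fin: "finite {v. \<alpha> v \<noteq> 0}"
    unfolding mono_ok_def by simp
  have "\<And>k. bij (sorting_perm (\<lambda>i. \<alpha> (k, i)))"
    by (intro bij_sorting_perm finite_support_row[OF fin])
  then have "f (\<alpha> \<circ> permute_var (\<lambda>k. sorting_perm (\<lambda>i. \<alpha> (k, i)))) = f \<alpha>"
    by (rule symmetric_serD[OF assms(1)])
  then have "f (shape_mono (shape \<alpha>)) = f \<alpha>"
    by (simp only: comp_permute_sorting_perm[OF fin])
  then show False
    using assms(3) shape_in_multipart[OF ok] \<open>f \<alpha> \<noteq> 0\<close> by simp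
qed

section \<open>Collapsing all parameters to one variable\<close>

type_synonym tpoly = "(nat \<Rightarrow>\<^sub>0 nat) \<Rightarrow>\<^sub>0 rat"

definition total_degree :: "(nat \<Rightarrow>\<^sub>0 nat) \<Rightarrow> nat" where
  "total_degree m = sum (Poly_Mapping.lookup m) (Poly_Mapping.keys m)"

lemma total_degree_superset:
  "finite S \<Longrightarrow> Poly_Mapping.keys m \<subseteq> S \<Longrightarrow> total_degree m = sum (Poly_Mapping.lookup m) S"
  unfolding total_degree_def by (rule sum.mono_neutral_left) (auto simp: in_keys_iff)

lemma total_degree_add: "total_degree (a + b) = total_degree a + total_degree b"
proof -
  let ?S = "Poly_Mapping.keys a \<union> Poly_Mapping.keys b"
  have "total_degree (a + b) = sum (Poly_Mapping.lookup (a + b)) ?S"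
    using keys_add[of a b] by (intro total_degree_superset) auto
  also have "\<dots> = total_degree a + total_degree b"
    by (simp add: lookup_add sum.distrib total_degree_superset[of ?S])
  finally show ?thesis .
qed

definition collapse_vars :: "tpoly \<Rightarrow> rat poly" where
  "collapse_vars p = (\<Sum>m\<in>Poly_Mapping.keys p. monom (Poly_Mapping.lookup p m) (total_degree m))"

lemma collapse_vars_superset:
  "finite S \<Longrightarrow> Poly_Mapping.keys p \<subseteq> S \<Longrightarrow> collapse_vars p = (\<Sum>m\<in>S. monom (Poly_Mapping.lookup p m) (total_degree m))"
  unfolding collapse_vars_def by (rule sum.mono_neutral_left) (auto simp: in_keys_iff)

lemma collapse_vars_add: "collapse_vars (p + q) = collapse_vars p + collapse_vars q"
proof -
  let ?S = "Poly_Mapping.keys p \<union> Poly_Mapping.keys q"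
  have "collapse_vars (p + q) = (\<Sum>m\<in>?S. monom (Poly_Mapping.lookup (p + q) m) (total_degree m))"
    using keys_add[of p q] by (intro collapse_vars_superset) auto
  also have "\<dots> = collapse_vars p + collapse_vars q"
    by (simp add: lookup_add add_monom[symmetric] sum.distrib collapse_vars_superset[of ?S])
  finally show ?thesis .
qed

lemma lookup_times_keys:
  "Poly_Mapping.lookup (p * q) m
     = (\<Sum>a\<in>Poly_Mapping.keys p. \<Sum>b\<in>Poly_Mapping.keys q.
          if m = a + b then Poly_Mapping.lookup p a * Poly_Mapping.lookup q b else 0)"
proof -
  have "Poly_Mapping.lookup (p * q) m
      = (\<Sum>a. Poly_Mapping.lookup p a * (\<Sum>b. Poly_Mapping.lookup q b when m = a + b))"
    by (rule lookup_mult)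
  also have "\<dots> = (\<Sum>a\<in>Poly_Mapping.keys p. Poly_Mapping.lookup p a * (\<Sum>b. Poly_Mapping.lookup q b when m = a + b))"
    by (rule Sum_any.expand_superset) (auto simp: in_keys_iff)
  also have "\<dots> = (\<Sum>a\<in>Poly_Mapping.keys p.
      Poly_Mapping.lookup p a * (\<Sum>b\<in>Poly_Mapping.keys q. Poly_Mapping.lookup q b when m = a + b))"
    by (intro sum.cong refl arg_cong2[where f = "(*)"] Sum_any.expand_superset) (auto simp: in_keys_iff)
  finally show ?thesis
    by (simp add: sum_distrib_left when_def if_distrib cong: if_cong)
qed

lemma collapse_vars_mult: "collapse_vars (p * q) = collapse_vars p * collapse_vars q"
proof -
  let ?S = "(\<lambda>(a, b). a + b) ` (Poly_Mapping.keys p \<times> Poly_Mapping.keys q)"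
  let ?t = "\<lambda>a b m. monom (if m = a + b then Poly_Mapping.lookup p a * Poly_Mapping.lookup q b else 0) (total_degree m)"
  have "collapse_vars (p * q) = (\<Sum>m\<in>?S. monom (Poly_Mapping.lookup (p * q) m) (total_degree m))"
    using keys_mult[of p q] by (intro collapse_vars_superset) auto
  also have "\<dots> = (\<Sum>a\<in>Poly_Mapping.keys p. \<Sum>b\<in>Poly_Mapping.keys q. \<Sum>m\<in>?S. ?t a b m)"
    by (simp add: lookup_times_keys monom_sum sum.swap[of _ ?S])
  also have "\<dots> = (\<Sum>a\<in>Poly_Mapping.keys p. \<Sum>b\<in>Poly_Mapping.keys q. monom (Poly_Mapping.lookup p a * Poly_Mapping.lookup q b) (total_degree (a + b)))"
  proof (intro sum.cong refl)
    fix a b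
    assume "a \<in> Poly_Mapping.keys p" "b \<in> Poly_Mapping.keys q"
    then have "a + b \<in> ?S" by blast
    have "(\<Sum>m\<in>?S. ?t a b m)
        = (\<Sum>m\<in>?S. if m = a + b then monom (Poly_Mapping.lookup p a * Poly_Mapping.lookup q b) (total_degree (a + b)) else 0)"
      by (intro sum.cong) auto
    then show "(\<Sum>m\<in>?S. ?t a b m) = monom (Poly_Mapping.lookup p a * Poly_Mapping.lookup q b) (total_degree (a + b))"
      using \<open>a + b \<in> ?S\<close> by (simp add: sum.delta)
  qed
  also have "\<dots> = collapse_vars p * collapse_vars q"
    by (simp add: collapse_vars_def total_degree_add mult_monom sum_product)
  finally show ?thesis .
qed

lemma collapse_vars_one: "collapse_vars 1 = 1"
  by (simp add: collapse_vars_def total_degree_def one_poly_def)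

interpretation collapse_vars: comm_ring_hom collapse_vars
  by unfold_locales (simp_all add: collapse_vars_add collapse_vars_mult collapse_vars_one,
      simp add: collapse_vars_def)

definition tpoly_var :: "nat \<Rightarrow> tpoly" where
  "tpoly_var k = Poly_Mapping.single (Poly_Mapping.single k 1) 1"

lemma collapse_vars_tpoly_var [simp]: "collapse_vars (tpoly_var k) = pCons 0 1"
  by (simp add: collapse_vars_def tpoly_var_def total_degree_def monom_Suc)

lemma tt_eq_to_fract: "tt r k = to_fract (tpoly_var (fam r k))"
  by (simp add: tt_def tvar_def tpoly_var_def to_fract_def)

interpretation to_fract: inj_comm_ring_hom "to_fract :: tpoly \<Rightarrow> ratfun"
  by unfold_locales auto

lemma coeff_mult_at_degree_bounds:
  fixes p q :: "'a::comm_ring_1 poly"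
  assumes "degree p \<le> a" "degree q \<le> b"
  shows "coeff (p * q) (a + b) = coeff p a * coeff q b"
proof -
  have "coeff p i * coeff q (a + b - i) = (if i = a then coeff p a * coeff q b else 0)" for i
    using assms by (cases i a rule: linorder_cases) (simp_all add: coeff_eq_0)
  then show ?thesis
    by (simp add: coeff_mult)
qed

definition ser_degree_le :: "nat \<Rightarrow> (mono \<Rightarrow> 'a::comm_ring_1 poly) \<Rightarrow> bool" where
  "ser_degree_le d F \<longleftrightarrow> (\<forall>\<alpha>. degree (F \<alpha>) \<le> d)"

definition top_coeff :: "nat \<Rightarrow> (mono \<Rightarrow> 'a::comm_ring_1 poly) \<Rightarrow> mono \<Rightarrow> 'a" where
  "top_coeff d F = (\<lambda>\<alpha>. coeff (F \<alpha>) d)"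

lemma ser_degree_le_mult:
  assumes "ser_degree_le a F" "ser_degree_le b G"
  shows "ser_degree_le (a + b) (ser_mult F G)"
  unfolding ser_degree_le_def
proof
  fix \<alpha>
  show "degree (ser_mult F G \<alpha>) \<le> a + b"
  proof (cases "finite {\<beta>::mono. \<forall>v. \<beta> v \<le> \<alpha> v}")
    case True
    show ?thesis
      unfolding ser_mult_def
      using assms unfolding ser_degree_le_def
      by (intro degree_sum_le[OF True] order.trans[OF degree_mult_le] add_mono) auto
  qed (simp add: ser_mult_def)
qed

lemma top_coeff_mult:
  "ser_degree_le a F \<Longrightarrow> ser_degree_le b G \<Longrightarrow>
   top_coeff (a + b) (ser_mult F G) = ser_mult (top_coeff a F) (top_coeff b G)"
  unfolding top_coeff_def ser_mult_def ser_degree_le_def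
  by (simp add: coeff_sum coeff_mult_at_degree_bounds)

lemma ser_degree_le_prod:
  "(\<And>F d. (F, d) \<in> set xs \<Longrightarrow> ser_degree_le d F) \<Longrightarrow>
   ser_degree_le (sum_list (map snd xs)) (ser_prod (map fst xs))"
proof (induction xs)
  case Nil
  then show ?case
    by (simp add: ser_degree_le_def ser_one_def)
next
  case (Cons x xs)
  then show ?case
    by (cases x) (simp add: ser_degree_le_mult)
qed

lemma top_coeff_prod:
  "(\<And>F d. (F, d) \<in> set xs \<Longrightarrow> ser_degree_le d F) \<Longrightarrow>
   top_coeff (sum_list (map snd xs)) (ser_prod (map fst xs)) = ser_prod (map (\<lambda>(F, d). top_coeff d F) xs)"
proof (induction xs)
  case Nil
  then show ?case
    by (simp add: top_coeff_def ser_one_def fun_eq_iff)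
next
  case (Cons x xs)
  then show ?case
    by (cases x) (simp add: top_coeff_mult ser_degree_le_prod)
qed

interpretation const_poly: comm_ring_hom "\<lambda>c::rat. [:c:]"
  by unfold_locales auto

lemma q_ser_at_X:
  "q_ser k k' (pCons 0 1) s \<alpha>
     = (\<Sum>j=0..s. monom ((-1) ^ j * ser_mult (e_ser k' j) (h_ser k (s - j)) \<alpha>) j :: rat poly)"
proof -
  have c: "ser_mult (e_ser k' j) (h_ser k (s - j)) \<alpha> = [:ser_mult (e_ser k' j) (h_ser k (s - j)) \<alpha> :: rat:]"
    for j
    using const_poly.hom_ser_mult[of "e_ser k' j" "h_ser k (s - j)" \<alpha>] by simp
  have X: "pCons 0 1 = monom (1::rat) 1"
    by (simp add: monom_Suc)
  have m: "(- pCons 0 1) ^ j * [:c:] = monom ((-1) ^ j * c) j" for j and c :: rat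
    unfolding X by (simp add: minus_monom monom_power mult_monom flip: monom_0)
  show ?thesis
    unfolding q_ser_def c m by (rule refl)
qed

lemma ser_degree_le_q_ser: "ser_degree_le s (q_ser k k' (pCons 0 1 :: rat poly) s)"
  unfolding ser_degree_le_def q_ser_at_X
  by (intro allI degree_sum_le order.trans[OF degree_monom_le]) auto

lemma top_coeff_q_ser: "top_coeff s (q_ser k k' (pCons 0 1 :: rat poly) s) = (\<lambda>\<alpha>. (-1) ^ s * e_ser k' s \<alpha>)"
proof -
  have one: "ser_mult (e_ser k' s) ser_one \<alpha> = (e_ser k' s \<alpha> :: rat)" for \<alpha>
    by (rule ser_mult_one_right) (simp add: e_ser_def in_fam_def split: if_splits)
  show ?thesis
    unfolding top_coeff_def q_ser_at_X
    by (simp add: fun_eq_iff coeff_sum coeff_monom h_ser_zero one)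
qed

definition e_prod :: "nat \<Rightarrow> (nat \<Rightarrow> nat) \<Rightarrow> (nat \<Rightarrow> nat list) \<Rightarrow> mono \<Rightarrow> rat" where
  "e_prod r \<phi> lam = ser_prod (map (\<lambda>(k, s). e_ser (\<phi> k) s) (tagged_parts r lam))"

lemma
  assumes "lam \<in> multipart r n"
  shows ser_degree_le_q_prod_X: "ser_degree_le n (q_prod r \<phi> (\<lambda>_. pCons 0 1 :: rat poly) lam)"
    and top_coeff_q_prod_X: "top_coeff n (q_prod r \<phi> (\<lambda>_. pCons 0 1 :: rat poly) lam) = (\<lambda>\<alpha>. (-1) ^ n * e_prod r \<phi> lam \<alpha>)"
proof -
  let ?xs = "map (\<lambda>x. (q_ser (fst x) (\<phi> (fst x)) (pCons 0 1 :: rat poly) (snd x), snd x))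
    (tagged_parts r lam)"
  have q: "ser_prod (map fst ?xs) = q_prod r \<phi> (\<lambda>_. pCons 0 1) lam"
    unfolding q_prod_def by (simp add: comp_def case_prod_unfold)
  have n: "sum_list (map snd ?xs) = n"
    using assms sum_list_tagged_parts[of r lam] unfolding multipart_def by (simp add: comp_def)
  have "ser_degree_le (sum_list (map snd ?xs)) (ser_prod (map fst ?xs))"
    by (rule ser_degree_le_prod) (auto simp: ser_degree_le_q_ser)
  then show "ser_degree_le n (q_prod r \<phi> (\<lambda>_. pCons 0 1 :: rat poly) lam)"
    unfolding q n .
  have "top_coeff (sum_list (map snd ?xs)) (ser_prod (map fst ?xs))
      = ser_prod (map (\<lambda>(F, d). top_coeff d F) ?xs)"
    by (rule top_coeff_prod) (auto simp: ser_degree_le_q_ser)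
  also have "map (\<lambda>(F, d). top_coeff d F) ?xs
      = map (\<lambda>x \<alpha>. (-1) ^ snd x * e_ser (\<phi> (fst x)) (snd x) \<alpha>) (tagged_parts r lam)"
    by (simp add: top_coeff_q_ser)
  finally have "top_coeff n (q_prod r \<phi> (\<lambda>_. pCons 0 1 :: rat poly) lam) \<alpha>
      = prod_list (map (\<lambda>x. (-1) ^ snd x) (tagged_parts r lam)) * e_prod r \<phi> lam \<alpha>" for \<alpha>
    unfolding q n e_prod_def by (simp add: ser_prod_scale case_prod_unfold)
  moreover have "prod_list (map (\<lambda>x. (-1::rat) ^ snd x) xs) = (-1) ^ sum_list (map snd xs)"
    for xs :: "(nat \<times> nat) list"
    by (induction xs) (simp_all add: power_add)
  ultimately show "top_coeff n (q_prod r \<phi> (\<lambda>_. pCons 0 1 :: rat poly) lam) = (\<lambda>\<alpha>. (-1) ^ n * e_prod r \<phi> lam \<alpha>)"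
    using assms sum_list_tagged_parts[of r lam] unfolding multipart_def by (simp add: fun_eq_iff)
qed

lemma coeff_prod_at_degree_bound:
  fixes f :: "'b \<Rightarrow> 'a::comm_ring_1 poly"
  assumes "finite I" "\<forall>i\<in>I. degree (f i) \<le> d"
  shows "degree (prod f I) \<le> d * card I \<and> coeff (prod f I) (d * card I) = (\<Prod>i\<in>I. coeff (f i) d)"
  using assms
proof (induction I rule: finite_induct)
  case (insert x F)
  then have "degree (f x) \<le> d" "degree (prod f F) \<le> d * card F"
    by auto
  then show ?case
    using insert by (simp add: coeff_mult_at_degree_bounds order.trans[OF degree_mult_le] add_mono)
qed simp

lemma coeff_det_at_degree_bound:
  fixes M :: "'a::comm_ring_1 poly mat"
  assumes M: "M \<in> carrier_mat N N" and deg: "\<And>i j. i < N \<Longrightarrow> j < N \<Longrightarrow> degree (M $$ (i, j)) \<le> d"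
  shows "coeff (det M) (d * N) = det (mat N N (\<lambda>(i, j). coeff (M $$ (i, j)) d))"
proof -
  let ?C = "mat N N (\<lambda>(i, j). coeff (M $$ (i, j)) d)"
  have "coeff (of_int (sign p) * (\<Prod>i = 0..<N. M $$ (i, p i))) (d * N)
      = of_int (sign p) * (\<Prod>i = 0..<N. ?C $$ (i, p i))" if p: "p permutes {0..<N}" for p
  proof -
    have "p i < N" if "i < N" for i
      using permutes_in_image[OF p] that by simp
    then have "coeff (\<Prod>i = 0..<N. M $$ (i, p i)) (d * N) = (\<Prod>i = 0..<N. ?C $$ (i, p i))"
      using coeff_prod_at_degree_bound[of "{0..<N}" "\<lambda>i. M $$ (i, p i)" d] deg by simp
    moreover have "sign p = 1 \<or> sign p = -1"
      by (simp add: sign_def)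
    ultimately show ?thesis
      by auto
  qed
  then show ?thesis
    unfolding det_def'[OF M] det_def'[of ?C N, simplified] coeff_sum by (intro sum.cong refl) simp
qed

lemma permutes_eq_id_if_weight_decreasing:
  fixes w :: "nat \<Rightarrow> nat"
  assumes p: "p permutes {0..<N}"
    and le: "\<And>i. i < N \<Longrightarrow> w (p i) \<le> w i"
    and eq: "\<And>i. i < N \<Longrightarrow> w (p i) = w i \<Longrightarrow> p i = i"
  shows "p = id"
proof
  fix i
  show "p i = id i"
  proof (cases "i < N")
    case True
    have "sum (w \<circ> p) {0..<N} = sum w {0..<N}"
      by (rule sum.permute[OF p, symmetric])
    then have "w (p i) = w i"
      using sum_mono_inv[of "w \<circ> p" "{0..<N}" w i] le True by simp
    then show ?thesis
      using eq True by simp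
  next
    case False
    then show ?thesis
      by (simp add: permutes_not_in[OF p])
  qed
qed

lemma det_neq_zero_if_weight_triangular:
  fixes A :: "'a::idom mat" and w :: "nat \<Rightarrow> nat"
  assumes A: "A \<in> carrier_mat N N"
    and le: "\<And>i j. i < N \<Longrightarrow> j < N \<Longrightarrow> A $$ (i, j) \<noteq> 0 \<Longrightarrow> w j \<le> w i"
    and eq: "\<And>i j. i < N \<Longrightarrow> j < N \<Longrightarrow> A $$ (i, j) \<noteq> 0 \<Longrightarrow> w j = w i \<Longrightarrow> j = i"
    and diag: "\<And>i. i < N \<Longrightarrow> A $$ (i, i) \<noteq> 0"
  shows "det A \<noteq> 0"
proof -
  have zero: "(\<Prod>i = 0..<N. A $$ (i, p i)) = 0" if p: "p permutes {0..<N}" and "p \<noteq> id" for p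
  proof (rule ccontr)
    assume "(\<Prod>i = 0..<N. A $$ (i, p i)) \<noteq> 0"
    then have "\<And>i. i < N \<Longrightarrow> A $$ (i, p i) \<noteq> 0"
      by auto
    then have "p = id"
      using le eq permutes_in_image[OF p] by (intro permutes_eq_id_if_weight_decreasing[where w = w, OF p]) auto
    with \<open>p \<noteq> id\<close> show False ..
  qed
  have "det A = (\<Sum>p | p permutes {0..<N}. of_int (sign p) * (\<Prod>i = 0..<N. A $$ (i, p i)))"
    by (rule det_def'[OF A])
  also have "\<dots> = (\<Sum>p | p permutes {0..<N}. if p = id then (\<Prod>i = 0..<N. A $$ (i, i)) else 0)"
    by (intro sum.cong refl) (auto simp: zero sign_id)
  also have "\<dots> = (\<Prod>i = 0..<N. A $$ (i, i))"
    by (simp add: sum.delta finite_permutations permutes_id)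
  finally show ?thesis
    using diag by simp
qed


lemma mat_mult_vec_nth:
  "A \<in> carrier_mat N N \<Longrightarrow> j < N \<Longrightarrow> (A *\<^sub>v vec N x) $ j = (\<Sum>k<N. A $$ (j, k) * x k)"
  by (simp add: scalar_prod_def atLeast0LessThan)

lemma det_neq_zero_iff_kernel_trivial:
  fixes A :: "'a::field mat"
  assumes A: "A \<in> carrier_mat N N"
  shows "det A \<noteq> 0 \<longleftrightarrow> (\<forall>x. (\<forall>j<N. (\<Sum>k<N. A $$ (j, k) * x k) = 0) \<longrightarrow> (\<forall>k<N. x k = 0))"
proof
  assume d: "det A \<noteq> 0"
  show "\<forall>x. (\<forall>j<N. (\<Sum>k<N. A $$ (j, k) * x k) = 0) \<longrightarrow> (\<forall>k<N. x k = 0)"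
  proof (rule allI, rule impI)
    fix x
    assume "\<forall>j<N. (\<Sum>k<N. A $$ (j, k) * x k) = 0"
    then have "A *\<^sub>v vec N x = 0\<^sub>v N"
      using A by (intro eq_vecI) (auto simp: scalar_prod_def atLeast0LessThan)
    moreover have "vec N x \<in> carrier_vec N"
      by simp
    ultimately have "vec N x = 0\<^sub>v N"
      using det_0_iff_vec_prod_zero_field[OF A] d by blast
    then show "\<forall>k<N. x k = 0"
      by (metis index_vec index_zero_vec(1))
  qed
next
  assume ker: "\<forall>x. (\<forall>j<N. (\<Sum>k<N. A $$ (j, k) * x k) = 0) \<longrightarrow> (\<forall>k<N. x k = 0)"
  show "det A \<noteq> 0"
  proof
    assume "det A = 0"
    then obtain v where v: "v \<in> carrier_vec N" "v \<noteq> 0\<^sub>v N" "A *\<^sub>v v = 0\<^sub>v N"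
      using det_0_iff_vec_prod_zero_field[OF A] by blast
    have "v = vec N (\<lambda>k. v $ k)"
      using v(1) by auto
    then have "(\<Sum>k<N. A $$ (j, k) * v $ k) = 0" if "j < N" for j
      using v(3) mat_mult_vec_nth[OF A that, of "\<lambda>k. v $ k"] that by simp
    then have "\<forall>k<N. v $ k = 0"
      using ker by blast
    then have "v = 0\<^sub>v N"
      using v(1) by (intro eq_vecI) auto
    with v(2) show False ..
  qed
qed

lemma det_in_Qt:
  assumes A: "A \<in> carrier_mat N N" and entries: "\<And>i j. i < N \<Longrightarrow> j < N \<Longrightarrow> A $$ (i, j) \<in> Qt r"
  shows "det A \<in> Qt r"
  unfolding det_def'[OF A]
proof (intro Qt_sum Qt_mult Qt_prod)
  show "of_int (sign p) \<in> Qt r" for p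
  proof -
    have "sign p = 1 \<or> sign p = -1"
      by (simp add: sign_def)
    then show ?thesis
      using Qt_uminus[OF Qt_one] by auto
  qed
  show "A $$ (i, p i) \<in> Qt r" if "p \<in> {p. p permutes {0..<N}}" "i \<in> {0..<N}" for p i
    using that entries permutes_in_image by fastforce
qed

lemma adj_mat_in_Qt:
  assumes A: "A \<in> carrier_mat N N" and entries: "\<And>i j. i < N \<Longrightarrow> j < N \<Longrightarrow> A $$ (i, j) \<in> Qt r"
    and "i < N" "j < N"
  shows "adj_mat A $$ (i, j) \<in> Qt r"
proof -
  have "det (mat_delete A j i) \<in> Qt r"
    using A entries by (intro det_in_Qt[of _ "N - 1"]) (auto simp: mat_delete_def)
  then show ?thesis
    using A assms(3,4) by (simp add: adj_mat_def cofactor_def Qt_mult Qt_power Qt_uminus)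
qed

lemma solution_in_Qt:
  fixes A :: "ratfun mat"
  assumes A: "A \<in> carrier_mat N N" and d: "det A \<noteq> 0"
    and entries: "\<And>i j. i < N \<Longrightarrow> j < N \<Longrightarrow> A $$ (i, j) \<in> Qt r"
    and w: "\<And>j. j < N \<Longrightarrow> w j \<in> Qt r"
  obtains x where "\<forall>k<N. x k \<in> Qt r" "\<forall>j<N. (\<Sum>k<N. A $$ (j, k) * x k) = w j"
proof
  let ?B = "adj_mat A"
  define x where "x k = inverse (det A) * (\<Sum>l<N. ?B $$ (k, l) * w l)" for k
  show "\<forall>k<N. x k \<in> Qt r"
    unfolding x_def using det_in_Qt[OF A entries] adj_mat_in_Qt[OF A entries] w
    by (auto intro!: Qt_mult Qt_inverse Qt_sum)
  have B: "?B \<in> carrier_mat N N" and AB: "A * ?B = det A \<cdot>\<^sub>m 1\<^sub>m N"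
    using adj_mat[OF A] by auto
  have AB_entry: "(\<Sum>k<N. A $$ (j, k) * ?B $$ (k, l)) = (if j = l then det A else 0)"
    if "j < N" "l < N" for j l
    using arg_cong[OF AB, of "\<lambda>M. M $$ (j, l)"] A B that by (simp add: scalar_prod_def atLeast0LessThan)
  show "\<forall>j<N. (\<Sum>k<N. A $$ (j, k) * x k) = w j"
  proof (intro allI impI)
    fix j
    assume j: "j < N"
    have "(\<Sum>k<N. A $$ (j, k) * x k) = inverse (det A) * (\<Sum>k<N. \<Sum>l<N. A $$ (j, k) * (?B $$ (k, l) * w l))"
      unfolding x_def by (simp add: sum_distrib_left mult.left_commute)
    also have "\<dots> = inverse (det A) * (\<Sum>l<N. \<Sum>k<N. A $$ (j, k) * (?B $$ (k, l) * w l))"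
      by (subst sum.swap) (rule refl)
    also have "\<dots> = inverse (det A) * (\<Sum>l<N. (\<Sum>k<N. A $$ (j, k) * ?B $$ (k, l)) * w l)"
      by (simp only: sum_distrib_right mult.assoc)
    also have "\<dots> = inverse (det A) * (\<Sum>l<N. if j = l then det A * w l else 0)"
      using AB_entry j by (intro arg_cong[where f = "(*) _"] sum.cong) auto
    also have "\<dots> = w j"
      using j d by simp
    finally show "(\<Sum>k<N. A $$ (j, k) * x k) = w j" .
  qed
qed

section \<open>Triangularity at Young diagram monomials\<close>

definition set_mono :: "(nat \<times> nat) set \<Rightarrow> mono" where
  "set_mono D = (\<lambda>v. if v \<in> D then 1 else 0)"

definition sq_weight :: "mono \<Rightarrow> nat" where
  "sq_weight \<alpha> = (\<Sum>v | \<alpha> v \<noteq> 0. (\<alpha> v)\<^sup>2)"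

lemma support_set_mono: "{v. set_mono D v \<noteq> 0} = D"
  by (auto simp: set_mono_def)

lemma mdeg_set_mono: "finite D \<Longrightarrow> mdeg (set_mono D) = card D"
  unfolding mdeg_def support_set_mono by (simp add: set_mono_def)

lemma e_ser_set_mono:
  assumes "finite D" "D \<subseteq> {v. fst v = k}"
  shows "e_ser k (card D) (set_mono D) = 1"
proof -
  have "fst v = k" if "set_mono D v \<noteq> 0" for v
    using subsetD[OF assms(2), of v] that by (simp add: set_mono_def split: if_splits)
  then have "in_fam k (set_mono D)"
    using assms(1) unfolding in_fam_iff support_set_mono by blast
  moreover have "\<forall>v. set_mono D v \<le> 1"
    by (simp add: set_mono_def)
  ultimately show ?thesis
    by (simp add: e_ser_def mdeg_set_mono[OF assms(1)])
qed

lemma e_ser_neq_zeroD: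
  assumes "e_ser k s \<beta> \<noteq> 0"
  shows "finite {v. \<beta> v \<noteq> 0}" "{v. \<beta> v \<noteq> 0} \<subseteq> {v. fst v = k}"
    and "card {v. \<beta> v \<noteq> 0} = s" "\<beta> = set_mono {v. \<beta> v \<noteq> 0}"
proof -
  have h: "in_fam k \<beta>" "\<forall>v. \<beta> v \<le> 1" "mdeg \<beta> = s"
    using assms unfolding e_ser_def by (auto split: if_splits)
  show "finite {v. \<beta> v \<noteq> 0}" "{v. \<beta> v \<noteq> 0} \<subseteq> {v. fst v = k}"
    using h(1) unfolding in_fam_iff by auto
  show \<beta>: "\<beta> = set_mono {v. \<beta> v \<noteq> 0}"
  proof
    fix v
    show "\<beta> v = set_mono {v. \<beta> v \<noteq> 0} v"
      using h(2)[rule_format, of v] by (auto simp: set_mono_def)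
  qed
  show "card {v. \<beta> v \<noteq> 0} = s"
    using h(3) mdeg_set_mono[OF \<open>finite {v. \<beta> v \<noteq> 0}\<close>] \<beta> by simp
qed

lemma sq_weight_sum_set_mono:
  assumes I: "finite I" and D: "\<And>i. i \<in> I \<Longrightarrow> finite (D i)"
  shows "sq_weight (\<lambda>v. \<Sum>i\<in>I. set_mono (D i) v) = (\<Sum>i\<in>I. \<Sum>j\<in>I. card (D i \<inter> D j))"
proof -
  let ?U = "\<Union>i\<in>I. D i"
  have U: "finite ?U"
    using I D by auto
  have "{v. (\<Sum>i\<in>I. set_mono (D i) v) \<noteq> 0} \<subseteq> ?U"
  proof
    fix v
    assume "v \<in> {v. (\<Sum>i\<in>I. set_mono (D i) v) \<noteq> 0}"
    then have "(\<Sum>i\<in>I. set_mono (D i) v) \<noteq> 0"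
      by simp
    then obtain i where "i \<in> I" "set_mono (D i) v \<noteq> 0"
      by (rule sum.not_neutral_contains_not_neutral)
    then show "v \<in> ?U"
      by (auto simp: set_mono_def split: if_splits)
  qed
  then have "sq_weight (\<lambda>v. \<Sum>i\<in>I. set_mono (D i) v) = (\<Sum>v\<in>?U. (\<Sum>i\<in>I. set_mono (D i) v)\<^sup>2)"
    unfolding sq_weight_def by (intro sum.mono_neutral_left[OF U]) auto
  also have "\<dots> = (\<Sum>v\<in>?U. \<Sum>i\<in>I. \<Sum>j\<in>I. set_mono (D i) v * set_mono (D j) v)"
    by (simp add: power2_eq_square sum_product)
  also have "\<dots> = (\<Sum>i\<in>I. \<Sum>j\<in>I. \<Sum>v\<in>?U. set_mono (D i) v * set_mono (D j) v)"
    by (subst sum.swap, subst (2) sum.swap, rule refl)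
  also have "\<dots> = (\<Sum>i\<in>I. \<Sum>j\<in>I. card (D i \<inter> D j))"
  proof (intro sum.cong refl)
    fix i j
    assume "i \<in> I" "j \<in> I"
    then have "?U \<inter> (D i \<inter> D j) = D i \<inter> D j"
      by blast
    have "(\<Sum>v\<in>?U. set_mono (D i) v * set_mono (D j) v) = (\<Sum>v\<in>?U. if v \<in> D i \<inter> D j then 1 else 0)"
      by (intro sum.cong) (auto simp: set_mono_def)
    also have "\<dots> = card (?U \<inter> (D i \<inter> D j))"
      unfolding card_eq_sum by (rule sum.inter_restrict[OF U, symmetric])
    finally show "(\<Sum>v\<in>?U. set_mono (D i) v * set_mono (D j) v) = card (D i \<inter> D j)"
      unfolding \<open>?U \<inter> (D i \<inter> D j) = D i \<inter> D j\<close> .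
  qed
  finally show ?thesis .
qed

definition row_cells :: "(nat \<Rightarrow> nat) \<Rightarrow> nat \<times> nat \<Rightarrow> (nat \<times> nat) set" where
  "row_cells \<phi> x = (\<lambda>p. (\<phi> (fst x), p)) ` {..<snd x}"

lemma finite_row_cells [simp]: "finite (row_cells \<phi> x)"
  by (simp add: row_cells_def)

lemma card_row_cells_Int:
  "card (row_cells \<phi> x \<inter> row_cells \<phi> y) = (if \<phi> (fst x) = \<phi> (fst y) then min (snd x) (snd y) else 0)"
proof -
  have "row_cells \<phi> x \<inter> row_cells \<phi> y
      = (if \<phi> (fst x) = \<phi> (fst y) then (\<lambda>p. (\<phi> (fst x), p)) ` {..<min (snd x) (snd y)} else {})"
    unfolding row_cells_def by auto
  then show ?thesis
    by (simp add: card_image inj_on_def)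
qed

lemma card_row_cells: "card (row_cells \<phi> x) = snd x"
  using card_row_cells_Int[of \<phi> x x] by simp

lemma card_Int_le_row_cells:
  assumes "finite D" "D \<subseteq> {v. fst v = \<phi> (fst x)}" "card D = snd x"
    and "finite D'" "D' \<subseteq> {v. fst v = \<phi> (fst y)}" "card D' = snd y"
  shows "card (D \<inter> D') \<le> card (row_cells \<phi> x \<inter> row_cells \<phi> y)"
proof (cases "\<phi> (fst x) = \<phi> (fst y)")
  case True
  then show ?thesis
    using assms card_mono[of D "D \<inter> D'"] card_mono[of D' "D \<inter> D'"]
    by (simp add: card_row_cells_Int)
next
  case False
  have "v \<notin> D \<inter> D'" for v
    using subsetD[OF assms(2), of v] subsetD[OF assms(5), of v] False by auto
  then have "D \<inter> D' = {}"
    by blast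
  then show ?thesis
    by simp
qed

definition diagram_mono :: "nat \<Rightarrow> (nat \<Rightarrow> nat) \<Rightarrow> (nat \<Rightarrow> nat list) \<Rightarrow> mono" where
  "diagram_mono r \<phi> \<nu> =
     (\<lambda>v. \<Sum>i<length (tagged_parts r \<nu>). set_mono (row_cells \<phi> (tagged_parts r \<nu> ! i)) v)"

lemma e_prod_diagram_pos: "e_prod r \<phi> lam (diagram_mono r \<phi> lam) > 0"
proof -
  let ?xs = "tagged_parts r lam"
  let ?Fs = "map (\<lambda>(k, s). e_ser (\<phi> k) s) ?xs :: (mono \<Rightarrow> rat) list"
  let ?bs = "map (\<lambda>x. set_mono (row_cells \<phi> x)) ?xs"
  have "{v. diagram_mono r \<phi> lam v \<noteq> 0} \<subseteq> (\<Union>i<length ?xs. row_cells \<phi> (?xs ! i))"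
    by (auto simp: diagram_mono_def set_mono_def split: if_splits)
  then have fin: "finite {v. diagram_mono r \<phi> lam v \<noteq> 0}"
    by (rule finite_subset) simp
  have one: "e_ser (\<phi> (fst x)) (snd x) (set_mono (row_cells \<phi> x)) = (1::rat)" for x
  proof -
    have "row_cells \<phi> x \<subseteq> {v. fst v = \<phi> (fst x)}"
      by (auto simp: row_cells_def)
    then have "e_ser (\<phi> (fst x)) (card (row_cells \<phi> x)) (set_mono (row_cells \<phi> x)) = (1::rat)"
      by (rule e_ser_set_mono[OF finite_row_cells])
    then show ?thesis
      by (simp only: card_row_cells)
  qed
  have "ser_prod ?Fs (diagram_mono r \<phi> lam) > 0"
  proof (rule ser_prod_pos[where bs = ?bs])
    show "\<And>F \<beta>. F \<in> set ?Fs \<Longrightarrow> 0 \<le> F \<beta>"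
      by (auto simp: e_ser_def)
    show "\<forall>i<length ?Fs. 0 < (?Fs ! i) (?bs ! i)"
      using one by (simp add: case_prod_unfold)
    show "\<forall>v. diagram_mono r \<phi> lam v = (\<Sum>i<length ?Fs. (?bs ! i) v)"
      by (simp add: diagram_mono_def)
    show "finite {v. diagram_mono r \<phi> lam v \<noteq> 0}"
      by (rule fin)
  qed simp
  then show ?thesis
    unfolding e_prod_def .
qed

lemma e_prod_neq_zeroE:
  assumes "e_prod r \<phi> lam \<alpha> \<noteq> 0"
  obtains D where
    "\<And>i. i < length (tagged_parts r lam) \<Longrightarrow> finite (D i)
       \<and> D i \<subseteq> {v. fst v = \<phi> (fst (tagged_parts r lam ! i))} \<and> card (D i) = snd (tagged_parts r lam ! i)"
    "\<alpha> = (\<lambda>v. \<Sum>i<length (tagged_parts r lam). set_mono (D i) v)"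
proof -
  let ?xs = "tagged_parts r lam"
  let ?Fs = "map (\<lambda>(k, s). e_ser (\<phi> k) s) ?xs :: (mono \<Rightarrow> rat) list"
  obtain bs where bs: "length bs = length ?Fs" "\<forall>i<length ?Fs. (?Fs ! i) (bs ! i) \<noteq> 0"
    "\<forall>v. \<alpha> v = (\<Sum>i<length ?Fs. (bs ! i) v)"
    using assms unfolding e_prod_def by (rule ser_prod_neq_zeroE)
  define D where "D i = {v. (bs ! i) v \<noteq> 0}" for i
  have e: "e_ser (\<phi> (fst (?xs ! i))) (snd (?xs ! i)) (bs ! i) \<noteq> (0::rat)" if "i < length ?xs" for i
    using bs(2) that by (simp add: case_prod_unfold)
  show ?thesis
  proof
    show "finite (D i) \<and> D i \<subseteq> {v. fst v = \<phi> (fst (?xs ! i))} \<and> card (D i) = snd (?xs ! i)"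
      if "i < length ?xs" for i
      using e_ser_neq_zeroD[OF e[OF that]] unfolding D_def by blast
    have "bs ! i = set_mono (D i)" if "i < length ?xs" for i
      using e_ser_neq_zeroD(4)[OF e[OF that]] unfolding D_def .
    then show "\<alpha> = (\<lambda>v. \<Sum>i<length ?xs. set_mono (D i) v)"
      using bs(3) by (simp add: fun_eq_iff del: split_paired_All)
  qed
qed

lemma sq_weight_diagram_mono:
  "sq_weight (diagram_mono r \<phi> lam)
     = (\<Sum>i<length (tagged_parts r lam). \<Sum>j<length (tagged_parts r lam).
          card (row_cells \<phi> (tagged_parts r lam ! i) \<inter> row_cells \<phi> (tagged_parts r lam ! j)))"
  unfolding diagram_mono_def by (rule sq_weight_sum_set_mono) auto

lemma sq_weight_diagram_le:
  assumes "e_prod r \<phi> lam (diagram_mono r \<phi> \<nu>) \<noteq> 0"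
  shows "sq_weight (diagram_mono r \<phi> \<nu>) \<le> sq_weight (diagram_mono r \<phi> lam)"
proof -
  let ?xs = "tagged_parts r lam"
  obtain D where D: "\<And>i. i < length ?xs \<Longrightarrow> finite (D i)
       \<and> D i \<subseteq> {v. fst v = \<phi> (fst (?xs ! i))} \<and> card (D i) = snd (?xs ! i)"
    and \<nu>: "diagram_mono r \<phi> \<nu> = (\<lambda>v. \<Sum>i<length ?xs. set_mono (D i) v)"
    using e_prod_neq_zeroE[OF assms] by blast
  have "sq_weight (diagram_mono r \<phi> \<nu>) = (\<Sum>i<length ?xs. \<Sum>j<length ?xs. card (D i \<inter> D j))"
    unfolding \<nu> using D by (intro sq_weight_sum_set_mono) auto
  also have "\<dots> \<le> sq_weight (diagram_mono r \<phi> lam)"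
    unfolding sq_weight_diagram_mono using D by (intro sum_mono card_Int_le_row_cells) auto
  finally show ?thesis .
qed

definition parts_gt :: "nat list \<Rightarrow> nat \<Rightarrow> nat" where
  "parts_gt l p = length (filter (\<lambda>x. p < x) l)"

lemma parts_gt_antimono: "q \<le> p \<Longrightarrow> parts_gt l p \<le> parts_gt l q"
  unfolding parts_gt_def by (induction l) auto

lemma partition_eq_if_parts_gt_eq:
  assumes "sorted_wrt (\<ge>) l" "sorted_wrt (\<ge>) l'" "0 \<notin> set l" "0 \<notin> set l'"
    and "parts_gt l = parts_gt l'"
  shows "l = l'"
proof -
  have shift: "parts_gt xs (v - 1) = parts_gt xs v + count (mset xs) v" if "v \<ge> 1" for xs v
    using that unfolding parts_gt_def by (induction xs) auto
  have "count (mset l) v = count (mset l') v" for v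
  proof (cases "v = 0")
    case True
    then show ?thesis
      using assms(3,4) by (metis count_eq_zero_iff set_mset_mset)
  next
    case False
    then show ?thesis
      using shift[of v l] shift[of v l'] assms(5) by simp
  qed
  then have "mset (rev l) = mset (rev l')"
    by (simp add: multiset_eqI)
  moreover have "sorted (rev l)" "sorted (rev l')"
    using assms(1,2) by (simp_all add: sorted_wrt_rev)
  ultimately show ?thesis
    using properties_for_sort sorted_sort_id by (metis rev_rev_ident)
qed

lemma diagram_mono_apply:
  assumes "inj_on \<phi> {1..r}" "k \<in> {1..r}"
  shows "diagram_mono r \<phi> \<nu> (\<phi> k, p) = parts_gt (\<nu> k) p"
proof -
  let ?ys = "tagged_parts r \<nu>"
  have fam: "\<phi> k = \<phi> (fst (?ys ! i)) \<longleftrightarrow> fst (?ys ! i) = k" if "i < length ?ys" for i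
    using fam_tagged_parts_eq_iff[OF assms nth_mem[OF that]] by auto
  have "diagram_mono r \<phi> \<nu> (\<phi> k, p) = card {i. i < length ?ys \<and> (\<phi> k, p) \<in> row_cells \<phi> (?ys ! i)}"
    unfolding diagram_mono_def set_mono_def by (simp add: sum.If_cases Int_def)
  also have "{i. i < length ?ys \<and> (\<phi> k, p) \<in> row_cells \<phi> (?ys ! i)}
      = {i. i < length ?ys \<and> fst (?ys ! i) = k \<and> p < snd (?ys ! i)}"
    using fam by (auto simp: row_cells_def)
  also have "card \<dots> = parts_gt (\<nu> k) p"
    unfolding parts_gt_def by (rule card_tagged_parts_filter[OF assms(2)])
  finally show ?thesis .
qed

lemma downward_closed_eq_lessThan:
  assumes "finite P" "\<And>p q. p \<in> P \<Longrightarrow> q < p \<Longrightarrow> q \<in> P"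
  shows "P = {..<card P}"
proof (cases "P = {}")
  case False
  then have "Max P \<in> P"
    using assms(1) by simp
  have "P = {..Max P}"
  proof
    show "P \<subseteq> {..Max P}"
      using Max_ge[OF assms(1)] by auto
    show "{..Max P} \<subseteq> P"
      using \<open>Max P \<in> P\<close> assms(2) by (auto simp: le_less)
  qed
  then show ?thesis
    by (metis card_lessThan lessThan_Suc_atMost)
qed simp

lemma nested_sets_eq_lessThan:
  fixes P :: "'i \<Rightarrow> nat set"
  assumes I: "finite I" "i \<in> I" and fin: "finite (P i)"
    and nested: "\<And>j j'. j \<in> I \<Longrightarrow> j' \<in> I \<Longrightarrow> P j \<subseteq> P j' \<or> P j' \<subseteq> P j"
    and anti: "\<And>p q. q \<le> p \<Longrightarrow> card {j\<in>I. p \<in> P j} \<le> card {j\<in>I. q \<in> P j}"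
  shows "P i = {..<card (P i)}"
proof (rule downward_closed_eq_lessThan[OF fin])
  fix p q
  assume p: "p \<in> P i" and "q < p"
  show "q \<in> P i"
  proof (rule ccontr)
    assume q: "q \<notin> P i"
    have "{j\<in>I. q \<in> P j} \<subseteq> {j\<in>I. p \<in> P j} - {i}"
      using nested[OF I(2)] p q by blast
    then have "card {j\<in>I. q \<in> P j} \<le> card ({j\<in>I. p \<in> P j} - {i})"
      using I(1) by (intro card_mono) auto
    also have "\<dots> < card {j\<in>I. p \<in> P j}"
      using I p by (intro card_Diff1_less) auto
    finally have "card {j\<in>I. q \<in> P j} < card {j\<in>I. p \<in> P j}" .
    then show False
      using anti[of q p] \<open>q < p\<close> by simp
  qed
qed

lemma nested_if_card_Int_eq_min:
  assumes "finite A" "finite B" "card (A \<inter> B) = min (card A) (card B)"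
  shows "A \<subseteq> B \<or> B \<subseteq> A"
proof (cases "card A \<le> card B")
  case True
  then have "A \<inter> B = A"
    using assms by (intro card_subset_eq) auto
  then show ?thesis
    by blast
next
  case False
  then have "A \<inter> B = B"
    using assms by (intro card_subset_eq) auto
  then show ?thesis
    by blast
qed

lemma double_sum_mono_inv:
  fixes f g :: "'i \<Rightarrow> 'i \<Rightarrow> 'a::ordered_cancel_comm_monoid_add"
  assumes I: "finite I" and le: "\<And>i j. i \<in> I \<Longrightarrow> j \<in> I \<Longrightarrow> f i j \<le> g i j"
    and eq: "(\<Sum>i\<in>I. \<Sum>j\<in>I. f i j) = (\<Sum>i\<in>I. \<Sum>j\<in>I. g i j)" and "i \<in> I" "j \<in> I"
  shows "f i j = g i j"
proof -
  have "(\<Sum>j\<in>I. f i j) = (\<Sum>j\<in>I. g i j)"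
    using sum_mono_inv[OF eq _ \<open>i \<in> I\<close> I] le by (simp add: sum_mono)
  then show ?thesis
    using sum_mono_inv[of "f i" I "g i" j] le \<open>i \<in> I\<close> \<open>j \<in> I\<close> I by simp
qed

lemma diagram_mono_inj:
  assumes inj: "inj_on \<phi> {1..r}" and "lam \<in> multipart r n" "\<nu> \<in> multipart r n'"
    and eq: "diagram_mono r \<phi> \<nu> = diagram_mono r \<phi> lam"
  shows "\<nu> = lam"
proof
  fix k
  show "\<nu> k = lam k"
  proof (cases "k \<in> {1..r}")
    case True
    then have "parts_gt (\<nu> k) p = parts_gt (lam k) p" for p
      using diagram_mono_apply[OF inj True, of \<nu> p] diagram_mono_apply[OF inj True, of lam p] eq by simp
    then show ?thesis
      using assms(2,3) unfolding multipart_def by (intro partition_eq_if_parts_gt_eq) auto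
  next
    case False
    then show ?thesis
      using assms(2,3) unfolding multipart_def by auto
  qed
qed

lemma card_cells_containing:
  fixes D :: "nat \<Rightarrow> (nat \<times> nat) set" and r :: nat and lam :: "nat \<Rightarrow> nat list"
  defines "xs \<equiv> tagged_parts r lam"
  assumes inj: "inj_on \<phi> {1..r}" and k: "k \<in> {1..r}"
    and cells: "\<And>i. i < length xs \<Longrightarrow> D i \<subseteq> {v. fst v = \<phi> (fst (xs ! i))}"
    and diagram: "diagram_mono r \<phi> \<nu> = (\<lambda>v. \<Sum>i<length xs. set_mono (D i) v)"
  shows "card {j. j < length xs \<and> fst (xs ! j) = k \<and> (\<phi> k, p) \<in> D j} = parts_gt (\<nu> k) p"
proof -
  have "\<phi> (fst (xs ! j)) = \<phi> k \<longleftrightarrow> fst (xs ! j) = k" if "j < length xs" for j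
    using fam_tagged_parts_eq_iff[OF inj k] nth_mem[OF that] unfolding xs_def by blast
  then have "{j. j < length xs \<and> (\<phi> k, p) \<in> D j} = {j. j < length xs \<and> fst (xs ! j) = k \<and> (\<phi> k, p) \<in> D j}"
    using cells by force
  moreover have "diagram_mono r \<phi> \<nu> (\<phi> k, p) = card {j. j < length xs \<and> (\<phi> k, p) \<in> D j}"
    unfolding diagram set_mono_def by (simp add: sum.If_cases Int_def)
  ultimately show ?thesis
    using diagram_mono_apply[OF inj k] by simp
qed

lemma cells_eq_row_cells:
  fixes D :: "nat \<Rightarrow> (nat \<times> nat) set" and r :: nat and lam :: "nat \<Rightarrow> nat list"
  defines "xs \<equiv> tagged_parts r lam"
  assumes inj: "inj_on \<phi> {1..r}"
    and cells: "\<And>i. i < length xs \<Longrightarrow> finite (D i)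
       \<and> D i \<subseteq> {v. fst v = \<phi> (fst (xs ! i))} \<and> card (D i) = snd (xs ! i)"
    and nested: "\<And>i j. i < length xs \<Longrightarrow> j < length xs \<Longrightarrow> fst (xs ! i) = fst (xs ! j)
       \<Longrightarrow> D i \<subseteq> D j \<or> D j \<subseteq> D i"
    and diagram: "diagram_mono r \<phi> \<nu> = (\<lambda>v. \<Sum>i<length xs. set_mono (D i) v)"
    and i: "i < length xs"
  shows "D i = row_cells \<phi> (xs ! i)"
proof -
  define k where "k = fst (xs ! i)"
  have k: "k \<in> {1..r}"
    using tagged_parts_memD[of k "snd (xs ! i)"] nth_mem[OF i] unfolding k_def xs_def by simp
  define I where "I = {j. j < length xs \<and> fst (xs ! j) = k}"
  define P where "P j = {p. (\<phi> k, p) \<in> D j}" for j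
  have D: "D j = Pair (\<phi> k) ` P j" if "j \<in> I" for j
    using cells that unfolding I_def P_def by force
  have count: "card {j\<in>I. p \<in> P j} = parts_gt (\<nu> k) p" for p
    using card_cells_containing[OF inj k _ diagram[unfolded xs_def]] cells
    unfolding I_def P_def xs_def by (simp add: conj_assoc)
  have iI: "i \<in> I"
    using i unfolding I_def k_def by simp
  have "P i = {..<card (P i)}"
  proof (rule nested_sets_eq_lessThan[where I = I])
    show "\<And>j j'. j \<in> I \<Longrightarrow> j' \<in> I \<Longrightarrow> P j \<subseteq> P j' \<or> P j' \<subseteq> P j"
      using nested unfolding I_def P_def by blast
    show "\<And>p q. q \<le> p \<Longrightarrow> card {j\<in>I. p \<in> P j} \<le> card {j\<in>I. q \<in> P j}"
      by (simp add: count parts_gt_antimono)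
    show "finite (P i)"
      using cells[OF i] D[OF iI] by (simp add: finite_image_iff inj_on_def)
  qed (use iI in \<open>auto simp: I_def\<close>)
  moreover have "card (P i) = snd (xs ! i)"
    using cells[OF i] D[OF iI] by (simp add: card_image inj_on_def)
  ultimately show ?thesis
    using D[OF iI] unfolding row_cells_def k_def by simp
qed

lemma eq_if_sq_weight_diagram_eq:
  assumes nz: "e_prod r \<phi> lam (diagram_mono r \<phi> \<nu>) \<noteq> 0" and inj: "inj_on \<phi> {1..r}"
    and lam: "lam \<in> multipart r n" and \<nu>: "\<nu> \<in> multipart r n'"
    and eq: "sq_weight (diagram_mono r \<phi> \<nu>) = sq_weight (diagram_mono r \<phi> lam)"
  shows "\<nu> = lam"
proof -
  let ?xs = "tagged_parts r lam"
  let ?C = "\<lambda>i. row_cells \<phi> (?xs ! i)"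
  obtain D where D: "\<And>i. i < length ?xs \<Longrightarrow> finite (D i)
       \<and> D i \<subseteq> {v. fst v = \<phi> (fst (?xs ! i))} \<and> card (D i) = snd (?xs ! i)"
    and diagram: "diagram_mono r \<phi> \<nu> = (\<lambda>v. \<Sum>i<length ?xs. set_mono (D i) v)"
    using e_prod_neq_zeroE[OF nz] by blast
  have le: "card (D i \<inter> D j) \<le> card (?C i \<inter> ?C j)" if "i < length ?xs" "j < length ?xs" for i j
    using D[OF that(1)] D[OF that(2)] by (intro card_Int_le_row_cells) auto
  have "sq_weight (diagram_mono r \<phi> \<nu>) = (\<Sum>i<length ?xs. \<Sum>j<length ?xs. card (D i \<inter> D j))"
    unfolding diagram by (rule sq_weight_sum_set_mono) (use D in auto)
  then have sums: "(\<Sum>i<length ?xs. \<Sum>j<length ?xs. card (D i \<inter> D j))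
      = (\<Sum>i<length ?xs. \<Sum>j<length ?xs. card (?C i \<inter> ?C j))"
    using eq unfolding sq_weight_diagram_mono by simp
  have Int_eq: "card (D i \<inter> D j) = card (?C i \<inter> ?C j)" if "i < length ?xs" "j < length ?xs" for i j
    using double_sum_mono_inv[OF _ _ sums] le that by simp
  have "D i \<subseteq> D j \<or> D j \<subseteq> D i"
    if "i < length ?xs" "j < length ?xs" "fst (?xs ! i) = fst (?xs ! j)" for i j
    using D[OF that(1)] D[OF that(2)] Int_eq[OF that(1,2)] that(3)
    by (intro nested_if_card_Int_eq_min) (auto simp: card_row_cells_Int)
  then have rows: "D i = ?C i" if "i < length ?xs" for i
    using cells_eq_row_cells[OF inj D _ diagram that] by blast
  have "(\<lambda>v. \<Sum>i<length ?xs. set_mono (D i) v) = diagram_mono r \<phi> lam"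
    unfolding diagram_mono_def using rows by (intro ext sum.cong) auto
  then have "diagram_mono r \<phi> \<nu> = diagram_mono r \<phi> lam"
    using diagram by simp
  then show ?thesis
    by (rule diagram_mono_inj[OF inj lam \<nu>])
qed


section \<open>Linear independence and the basis property\<close>

lemma finite_multipart: "finite (multipart r n)"
proof -
  let ?S = "{xs. set xs \<subseteq> {0..n} \<and> length xs \<le> n}"
  have len: "length xs \<le> sum_list xs" if "0 \<notin> set xs" for xs :: "nat list"
    using that by (induction xs) auto
  have "lam k \<in> ?S" if m: "lam \<in> multipart r n" and k: "k \<in> {1..r}" for lam k
  proof -
    have "sum_list (lam k) \<le> (\<Sum>k=1..r. sum_list (lam k))"
      using k by (intro member_le_sum) auto
    then have sl: "sum_list (lam k) \<le> n"
      using m unfolding multipart_def by simp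
    have "set (lam k) \<subseteq> {0..n}"
      using member_le_sum_list[of _ "lam k"] sl by (meson atLeastAtMost_iff le0 order_trans subsetI)
    moreover have "length (lam k) \<le> n"
      using len[of "lam k"] m sl unfolding multipart_def by auto
    ultimately show ?thesis
      by simp
  qed
  then have "multipart r n \<subseteq> {f. \<forall>x. (x \<in> {1..r} \<longrightarrow> f x \<in> ?S) \<and> (x \<notin> {1..r} \<longrightarrow> f x = [])}"
    unfolding multipart_def by blast
  moreover have "finite {f. \<forall>x. (x \<in> {1..r} \<longrightarrow> f x \<in> ?S) \<and> (x \<notin> {1..r} \<longrightarrow> f x = [])}"
    by (intro finite_set_of_finite_funs finite_lists_length_le) auto
  ultimately show ?thesis
    by (rule finite_subset)
qed

lemma multipart_enumE:
  obtains e where "bij_betw e {..<card (multipart r n)} (multipart r n)"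
  using ex_bij_betw_nat_finite[OF finite_multipart] by (auto simp: atLeast0LessThan)

lemma lincomb_eq_if_eq_on_shapes:
  assumes "\<forall>lam\<in>multipart r n. b lam \<in> XiQt r n" "f \<in> XiQt r n"
    and "\<forall>\<mu>\<in>multipart r n. f (shape_mono \<mu>) = (\<Sum>lam\<in>multipart r n. c lam * b lam (shape_mono \<mu>))"
  shows "f \<alpha> = (\<Sum>lam\<in>multipart r n. c lam * b lam \<alpha>)"
proof -
  let ?g = "\<lambda>\<alpha>. f \<alpha> - (\<Sum>lam\<in>multipart r n. c lam * b lam \<alpha>)"
  have "?g \<alpha> = 0"
  proof (rule symmetric_homogeneous_eq_zero[where f = ?g])
    show "symmetric_ser ?g"
      using assms(1,2) unfolding XiQt_iff by (intro symmetric_ser_diff symmetric_ser_lincomb) auto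
    show "homogeneous r n ?g"
      using assms(1,2) unfolding XiQt_iff by (intro homogeneous_diff homogeneous_lincomb) auto
  qed (use assms(3) in simp)
  then show ?thesis
    by simp
qed

definition shape_matrix ::
    "nat \<Rightarrow> (nat \<Rightarrow> nat \<Rightarrow> nat list) \<Rightarrow> ((nat \<Rightarrow> nat list) \<Rightarrow> mono \<Rightarrow> 'a::comm_ring_1) \<Rightarrow> 'a mat"
  where "shape_matrix N e b = mat N N (\<lambda>(j, i). b (e i) (shape_mono (e j)))"

lemma shape_matrix_mult:
  assumes e: "bij_betw e {..<N} (multipart r n)" and "j < N"
  shows "(\<Sum>i<N. shape_matrix N e b $$ (j, i) * x i)
    = (\<Sum>lam\<in>multipart r n. x (inv_into {..<N} e lam) * b lam (shape_mono (e j)))"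
proof -
  have "(\<Sum>i<N. shape_matrix N e b $$ (j, i) * x i)
      = (\<Sum>i<N. x (inv_into {..<N} e (e i)) * b (e i) (shape_mono (e j)))"
    using assms by (intro sum.cong) (simp_all add: shape_matrix_def bij_betw_inv_into_left mult.commute)
  also have "\<dots> = (\<Sum>lam\<in>multipart r n. x (inv_into {..<N} e lam) * b lam (shape_mono (e j)))"
    by (rule sum.reindex_bij_betw[OF e])
  finally show ?thesis .
qed

lemma det_shape_matrix_neq_zero:
  assumes e: "bij_betw e {..<N} (multipart r n)"
    and mem: "\<forall>lam\<in>multipart r n. b lam \<in> XiQt r n"
    and indep: "\<And>c. \<forall>\<alpha>. (\<Sum>lam\<in>multipart r n. c lam * b lam \<alpha>) = 0 \<Longrightarrow> \<forall>lam\<in>multipart r n. c lam = 0"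
  shows "det (shape_matrix N e b) \<noteq> 0"
proof -
  have M: "shape_matrix N e b \<in> carrier_mat N N"
    by (simp add: shape_matrix_def)
  show ?thesis
    unfolding det_neq_zero_iff_kernel_trivial[OF M]
  proof (intro allI impI)
    fix x :: "nat \<Rightarrow> ratfun" and k
    let ?c = "\<lambda>lam. x (inv_into {..<N} e lam)"
    assume ker: "\<forall>j<N. (\<Sum>i<N. shape_matrix N e b $$ (j, i) * x i) = 0" and "k < N"
    have "\<forall>\<mu>\<in>multipart r n. (\<lambda>_. 0) (shape_mono \<mu>) = (\<Sum>lam\<in>multipart r n. ?c lam * b lam (shape_mono \<mu>))"
      unfolding bij_betw_ball[OF e] using ker by (simp add: shape_matrix_mult[OF e, symmetric])
    moreover have "(\<lambda>_. 0) \<in> XiQt r n"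
      by (simp add: XiQt_def)
    ultimately have "(\<lambda>_. 0) \<alpha> = (\<Sum>lam\<in>multipart r n. ?c lam * b lam \<alpha>)" for \<alpha>
      by (intro lincomb_eq_if_eq_on_shapes[OF mem])
    then have "\<forall>lam\<in>multipart r n. ?c lam = 0"
      by (intro indep) simp
    then show "x k = 0"
      using bij_betwE[OF e] bij_betw_inv_into_left[OF e] \<open>k < N\<close> by force
  qed
qed

lemma Qt_coordinates_if_det_shape_matrix_neq_zero:
  assumes e: "bij_betw e {..<N} (multipart r n)"
    and mem: "\<forall>lam\<in>multipart r n. b lam \<in> XiQt r n"
    and det: "det (shape_matrix N e b) \<noteq> 0" and f: "f \<in> XiQt r n"
  shows "\<exists>c. (\<forall>lam\<in>multipart r n. c lam \<in> Qt r) \<and> (\<forall>\<alpha>. f \<alpha> = (\<Sum>lam\<in>multipart r n. c lam * b lam \<alpha>))"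
proof -
  obtain x where x: "\<forall>i<N. x i \<in> Qt r"
    "\<forall>j<N. (\<Sum>i<N. shape_matrix N e b $$ (j, i) * x i) = f (shape_mono (e j))"
  proof (rule solution_in_Qt[OF _ det])
    show "\<And>j i. j < N \<Longrightarrow> i < N \<Longrightarrow> shape_matrix N e b $$ (j, i) \<in> Qt r"
      using mem bij_betwE[OF e] unfolding XiQt_iff by (simp add: shape_matrix_def)
    show "\<And>j. j < N \<Longrightarrow> f (shape_mono (e j)) \<in> Qt r"
      using f unfolding XiQt_iff by blast
  qed (simp add: shape_matrix_def)
  let ?c = "\<lambda>lam. x (inv_into {..<N} e lam)"
  have "\<forall>\<mu>\<in>multipart r n. f (shape_mono \<mu>) = (\<Sum>lam\<in>multipart r n. ?c lam * b lam (shape_mono \<mu>))"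
    unfolding bij_betw_ball[OF e] using x(2) by (simp add: shape_matrix_mult[OF e, symmetric])
  then have "\<forall>\<alpha>. f \<alpha> = (\<Sum>lam\<in>multipart r n. ?c lam * b lam \<alpha>)"
    by (intro allI lincomb_eq_if_eq_on_shapes[OF mem f])
  moreover have "\<forall>lam\<in>multipart r n. ?c lam \<in> Qt r"
    using x(1) bij_betw_inv_into[OF e] by (auto dest: bij_betwE)
  ultimately show ?thesis
    by (intro exI[of _ ?c]) blast
qed

lemma is_Qt_basisI:
  assumes mem: "\<And>lam. lam \<in> multipart r n \<Longrightarrow> b lam \<in> XiQt r n"
    and indep: "\<And>c. \<forall>\<alpha>. (\<Sum>lam\<in>multipart r n. c lam * b lam \<alpha>) = 0 \<Longrightarrow> \<forall>lam\<in>multipart r n. c lam = 0"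
  shows "is_Qt_basis r n b"
proof -
  obtain e where e: "bij_betw e {..<card (multipart r n)} (multipart r n)"
    by (rule multipart_enumE)
  have "\<forall>lam\<in>multipart r n. b lam \<in> XiQt r n"
    using mem by blast
  then show ?thesis
    unfolding is_Qt_basis_def
    using mem indep Qt_coordinates_if_det_shape_matrix_neq_zero[OF e _ det_shape_matrix_neq_zero[OF e]]
    by blast
qed

lemma det_e_prod_diagram_matrix_neq_zero:
  assumes inj: "inj_on \<phi> {1..r}" and e: "bij_betw e {..<N} (multipart r n)" and "c \<noteq> 0"
  shows "det (mat N N (\<lambda>(i, j). c * e_prod r \<phi> (e i) (diagram_mono r \<phi> (e j)))) \<noteq> 0"
proof (rule det_neq_zero_if_weight_triangular[where w = "\<lambda>i. sq_weight (diagram_mono r \<phi> (e i))"])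
  fix i j
  assume ij: "i < N" "j < N" "mat N N (\<lambda>(i, j). c * e_prod r \<phi> (e i) (diagram_mono r \<phi> (e j))) $$ (i, j) \<noteq> 0"
  then have nz: "e_prod r \<phi> (e i) (diagram_mono r \<phi> (e j)) \<noteq> 0"
    by simp
  show "sq_weight (diagram_mono r \<phi> (e j)) \<le> sq_weight (diagram_mono r \<phi> (e i))"
    by (rule sq_weight_diagram_le[OF nz])
  assume "sq_weight (diagram_mono r \<phi> (e j)) = sq_weight (diagram_mono r \<phi> (e i))"
  then have "e j = e i"
    using ij bij_betwE[OF e] by (intro eq_if_sq_weight_diagram_eq[OF nz inj]) auto
  then show "j = i"
    using e ij by (auto simp: bij_betw_def inj_on_def)
qed (use e_prod_diagram_pos \<open>c \<noteq> 0\<close> in \<open>auto simp: less_le\<close>)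

lemma det_diagram_matrix_neq_zero:
  assumes inj: "inj_on \<phi> {1..r}" and e: "bij_betw e {..<N} (multipart r n)"
  shows "det (mat N N (\<lambda>(i, j). q_prod r \<phi> (\<lambda>_. pCons 0 1 :: rat poly) (e i) (diagram_mono r \<phi> (e j)))) \<noteq> 0"
    (is "det ?M \<noteq> 0")
proof -
  have e_in: "i < N \<Longrightarrow> e i \<in> multipart r n" for i
    using bij_betwE[OF e] by simp
  have "coeff (det ?M) (n * N) = det (mat N N (\<lambda>(i, j). coeff (?M $$ (i, j)) n))"
    using ser_degree_le_q_prod_X[OF e_in] by (intro coeff_det_at_degree_bound) (auto simp: ser_degree_le_def)
  also have "mat N N (\<lambda>(i, j). coeff (?M $$ (i, j)) n)
      = mat N N (\<lambda>(i, j). (-1) ^ n * e_prod r \<phi> (e i) (diagram_mono r \<phi> (e j)))"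
    using top_coeff_q_prod_X[OF e_in] by (intro eq_matI) (auto simp: top_coeff_def fun_eq_iff)
  finally show ?thesis
    using det_e_prod_diagram_matrix_neq_zero[OF inj e, of "(-1) ^ n"] by auto
qed

lemma det_q_prod_diagram_matrix_neq_zero:
  fixes TR :: "nat \<Rightarrow> tpoly"
  assumes inj: "inj_on \<phi> {1..r}" and e: "bij_betw e {..<N} (multipart r n)"
    and TR: "\<And>k. collapse_vars (TR k) = pCons 0 1"
  shows "det (mat N N (\<lambda>(i, j). q_prod r \<phi> TR (e i) (diagram_mono r \<phi> (e j)))) \<noteq> 0"
    (is "det ?P \<noteq> 0")
proof -
  have "map_mat collapse_vars ?P
      = mat N N (\<lambda>(i, j). q_prod r \<phi> (\<lambda>_. pCons 0 1) (e i) (diagram_mono r \<phi> (e j)))"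
    by (rule eq_matI) (auto simp: collapse_vars.hom_q_prod comp_def TR)
  then have "collapse_vars (det ?P) \<noteq> 0"
    using det_diagram_matrix_neq_zero[OF inj e] collapse_vars.hom_det[of ?P] by simp
  then show ?thesis
    by (metis collapse_vars.hom_zero)
qed

lemma q_prod_linear_independent:
  fixes TR :: "nat \<Rightarrow> tpoly"
  assumes inj: "inj_on \<phi> {1..r}" and TR: "\<And>k. collapse_vars (TR k) = pCons 0 1"
    and zero: "\<forall>\<alpha>. (\<Sum>lam\<in>multipart r n. c lam * q_prod r \<phi> (\<lambda>k. to_fract (TR k)) lam \<alpha>) = 0"
  shows "\<forall>lam\<in>multipart r n. c lam = 0"
proof -
  let ?N = "card (multipart r n)"
  obtain e where e: "bij_betw e {..<?N} (multipart r n)"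
    by (rule multipart_enumE)
  let ?P = "mat ?N ?N (\<lambda>(i, j). q_prod r \<phi> TR (e i) (diagram_mono r \<phi> (e j)))"
  let ?G = "mat ?N ?N (\<lambda>(j, k). q_prod r \<phi> (\<lambda>k. to_fract (TR k)) (e k) (diagram_mono r \<phi> (e j)))"
  have G: "?G = transpose_mat (map_mat to_fract ?P)"
    by (rule eq_matI) (auto simp: to_fract.hom_q_prod comp_def)
  have P: "map_mat to_fract ?P \<in> carrier_mat ?N ?N"
    by simp
  have "det ?G = to_fract (det ?P)"
    unfolding G by (simp add: det_transpose[OF P] to_fract.hom_det)
  then have "det ?G \<noteq> 0"
    using det_q_prod_diagram_matrix_neq_zero[where TR = TR, OF inj e TR] by simp
  then have ker: "\<forall>x. (\<forall>j<?N. (\<Sum>k<?N. ?G $$ (j, k) * x k) = 0) \<longrightarrow> (\<forall>k<?N. x k = 0)"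
    using det_neq_zero_iff_kernel_trivial[of ?G ?N] by simp
  have "(\<Sum>k<?N. ?G $$ (j, k) * c (e k)) = 0" if "j < ?N" for j
    using that zero sum.reindex_bij_betw[OF e, of "\<lambda>lam. c lam * q_prod r \<phi> (\<lambda>k. to_fract (TR k)) lam (diagram_mono r \<phi> (e j))"]
    by (simp add: mult.commute)
  then have "\<forall>k<?N. c (e k) = 0"
    using ker[rule_format, of "\<lambda>k. c (e k)"] by blast
  then show ?thesis
    using bij_betw_ball[OF e] by simp
qed

lemma is_Qt_basis_q_prod:
  fixes TR :: "nat \<Rightarrow> tpoly"
  assumes "inj_on \<phi> {1..r}" "\<And>k. k \<in> {1..r} \<Longrightarrow> \<phi> k \<in> {1..r}"
    and "\<And>k. to_fract (TR k) \<in> Qt r" "\<And>k. collapse_vars (TR k) = pCons 0 1"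
  shows "is_Qt_basis r n (q_prod r \<phi> (\<lambda>k. to_fract (TR k)))"
proof (rule is_Qt_basisI)
  show "q_prod r \<phi> (\<lambda>k. to_fract (TR k)) lam \<in> XiQt r n" if "lam \<in> multipart r n" for lam
    using assms(2,3) that by (rule q_prod_in_XiQt)
  show "\<forall>lam\<in>multipart r n. c lam = 0"
    if "\<forall>\<alpha>. (\<Sum>lam\<in>multipart r n. c lam * q_prod r \<phi> (\<lambda>k. to_fract (TR k)) lam \<alpha>) = 0" for c
    using assms(1,4) that by (rule q_prod_linear_independent)
qed

theorem lemma2p6:
  fixes r n :: nat
  assumes "r \<ge> 2"
  shows "is_Qt_basis r n (qplus r) \<and> is_Qt_basis r n (qminus r)"
proof -
  have r: "r > 0"
    using assms by simp
  have basis: "is_Qt_basis r n (q_prod r (\<lambda>k. fam r (int k + a)) (\<lambda>k. to_fract (tpoly_var (fam r (int k + b)))))"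
    for a b
    using inj_on_fam_shift[OF r] fam_in_range[OF r] tt_in_Qt[OF r] unfolding tt_eq_to_fract
    by (intro is_Qt_basis_q_prod) auto
  have "qplus r = q_prod r (\<lambda>k. fam r (int k + -1)) (\<lambda>k. to_fract (tpoly_var (fam r (int k + -1))))"
    "qminus r = q_prod r (\<lambda>k. fam r (int k + 1)) (\<lambda>k. to_fract (tpoly_var (fam r (int k + 0))))"
    by (simp_all add: qplus_eq_q_prod qminus_eq_q_prod tt_eq_to_fract)
  then show ?thesis
    using basis by metis
qed


end
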